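(* Let $T$ be a ring and $\mathcal A$ a multiplicatively closed right Ore subset of regular elements of $T$ with $1\in\mathcal A$. Suppose there exists a right $T$-module $V$ such that the injective hull $E_{T\mathcal A^{-1}}(V\otimes_T T\mathcal A^{-1})$ is not locally Artinian as a $T\mathcal A^{-1}$-module. Then $E_T(V/\tau(V))$ is not a locally Artinian $T$-module, where $\tau(V)$ is the $\mathcal A$-torsion submodule of $V$.
   Context: A module is locally Artinian if every finitely generated submodule is Artinian. $\tau(V)=\{v\in V: va=0 \text{ for some } a\in\mathcal A\}$. *)

theory Defs
  imports "HOL-Algebra.Module"
begin

text \<open>We use the record type of HOL-Algebra modules, but read the scalar
  multiplication as a RIGHT action: the product v r of v \<in> M by r \<in> R
  is written ract M v r = smult M r v.  The fields mult/one of the record are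
  irrelevant and unused.\<close>

definition ract :: "('r, 'm, 'x) module_scheme \<Rightarrow> 'm \<Rightarrow> 'r \<Rightarrow> 'm" where
  "ract M v r = smult M r v"

definition right_module :: "('r, 'x) ring_scheme \<Rightarrow> ('r, 'm, 'y) module_scheme \<Rightarrow> bool" where
  "right_module R M \<longleftrightarrow> ring R \<and> abelian_group M \<and>
     (\<forall>v\<in>carrier M. \<forall>r\<in>carrier R. ract M v r \<in> carrier M) \<and>
     (\<forall>v\<in>carrier M. \<forall>w\<in>carrier M. \<forall>r\<in>carrier R.
        ract M (v \<oplus>\<^bsub>M\<^esub> w) r = ract M v r \<oplus>\<^bsub>M\<^esub> ract M w r) \<and>
     (\<forall>v\<in>carrier M. \<forall>r\<in>carrier R. \<forall>s\<in>carrier R.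
        ract M v (r \<oplus>\<^bsub>R\<^esub> s) = ract M v r \<oplus>\<^bsub>M\<^esub> ract M v s) \<and>
     (\<forall>v\<in>carrier M. \<forall>r\<in>carrier R. \<forall>s\<in>carrier R.
        ract M v (r \<otimes>\<^bsub>R\<^esub> s) = ract M (ract M v r) s) \<and>
     (\<forall>v\<in>carrier M. ract M v \<one>\<^bsub>R\<^esub> = v)"

definition submod :: "('r, 'x) ring_scheme \<Rightarrow> ('r, 'm, 'y) module_scheme \<Rightarrow> 'm set \<Rightarrow> bool" where
  "submod R M N \<longleftrightarrow> N \<subseteq> carrier M \<and> \<zero>\<^bsub>M\<^esub> \<in> N \<and>
     (\<forall>v\<in>N. \<forall>w\<in>N. v \<oplus>\<^bsub>M\<^esub> w \<in> N) \<and> (\<forall>v\<in>N. \<ominus>\<^bsub>M\<^esub> v \<in> N) \<and>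
     (\<forall>v\<in>N. \<forall>r\<in>carrier R. ract M v r \<in> N)"

definition gen_submod :: "('r, 'x) ring_scheme \<Rightarrow> ('r, 'm, 'y) module_scheme \<Rightarrow> 'm set \<Rightarrow> 'm set" where
  "gen_submod R M X = \<Inter> {N. submod R M N \<and> X \<subseteq> N}"

definition artinian_submod :: "('r, 'x) ring_scheme \<Rightarrow> ('r, 'm, 'y) module_scheme \<Rightarrow> 'm set \<Rightarrow> bool" where
  "artinian_submod R M N \<longleftrightarrow>
     (\<forall>f :: nat \<Rightarrow> 'm set. (\<forall>n. submod R M (f n) \<and> f n \<subseteq> N) \<and> (\<forall>n. f (Suc n) \<subseteq> f n)
        \<longrightarrow> (\<exists>n. \<forall>m\<ge>n. f m = f n))"

definition locally_artinian :: "('r, 'x) ring_scheme \<Rightarrow> ('r, 'm, 'y) module_scheme \<Rightarrow> bool" where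
  "locally_artinian R M \<longleftrightarrow>
     (\<forall>X. finite X \<and> X \<subseteq> carrier M \<longrightarrow> artinian_submod R M (gen_submod R M X))"

text \<open>Homomorphisms of right modules (only linearity is required of the source).\<close>
definition rhom :: "('r, 'x) ring_scheme \<Rightarrow> ('r, 'm, 'y) module_scheme \<Rightarrow> ('r, 'n, 'z) module_scheme
                    \<Rightarrow> ('m \<Rightarrow> 'n) \<Rightarrow> bool" where
  "rhom R M N f \<longleftrightarrow> f \<in> carrier M \<rightarrow> carrier N \<and>
     (\<forall>v\<in>carrier M. \<forall>w\<in>carrier M. f (v \<oplus>\<^bsub>M\<^esub> w) = f v \<oplus>\<^bsub>N\<^esub> f w) \<and>
     (\<forall>v\<in>carrier M. \<forall>r\<in>carrier R. f (ract M v r) = ract N (f v) r)"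

definition rreg :: "('r, 'x) ring_scheme \<Rightarrow> ('r, 'r) module" where
  "rreg R = \<lparr>carrier = carrier R, mult = mult R, one = one R, zero = zero R, add = add R,
             smult = (\<lambda>r v. v \<otimes>\<^bsub>R\<^esub> r)\<rparr>"

text \<open>Injective right module, via Baer's criterion: every homomorphism from a right
  ideal I of R into M extends to R, i.e. is left multiplication by some m \<in> M.\<close>
definition injective_mod :: "('r, 'x) ring_scheme \<Rightarrow> ('r, 'm, 'y) module_scheme \<Rightarrow> bool" where
  "injective_mod R M \<longleftrightarrow> right_module R M \<and>
     (\<forall>I f. submod R (rreg R) I \<and> f \<in> I \<rightarrow> carrier M \<and>
        (\<forall>x\<in>I. \<forall>y\<in>I. f (x \<oplus>\<^bsub>R\<^esub> y) = f x \<oplus>\<^bsub>M\<^esub> f y) \<and>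
        (\<forall>x\<in>I. \<forall>r\<in>carrier R. f (x \<otimes>\<^bsub>R\<^esub> r) = ract M (f x) r)
      \<longrightarrow> (\<exists>m\<in>carrier M. \<forall>x\<in>I. f x = ract M m x))"

definition essential :: "('r, 'x) ring_scheme \<Rightarrow> ('r, 'm, 'y) module_scheme \<Rightarrow> 'm set \<Rightarrow> bool" where
  "essential R M N \<longleftrightarrow> submod R M N \<and>
     (\<forall>K. submod R M K \<and> K \<noteq> {\<zero>\<^bsub>M\<^esub>} \<longrightarrow> K \<inter> N \<noteq> {\<zero>\<^bsub>M\<^esub>})"

text \<open>hull_via R M E f K: E is an injective hull of the quotient module M/K, the
  embedding M/K \<rightarrow> E being the map induced by f (f is a homomorphism with kernel
  exactly K, and its image is an essential submodule of the injective module E).\<close>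
definition hull_via :: "('r, 'x) ring_scheme \<Rightarrow> ('r, 'm, 'y) module_scheme \<Rightarrow> ('r, 'e, 'z) module_scheme
                        \<Rightarrow> ('m \<Rightarrow> 'e) \<Rightarrow> 'm set \<Rightarrow> bool" where
  "hull_via R M E f K \<longleftrightarrow> injective_mod R E \<and> rhom R M E f \<and>
     {v \<in> carrier M. f v = \<zero>\<^bsub>E\<^esub>} = K \<and> essential R E (f ` carrier M)"

definition regular_elem :: "('r, 'x) ring_scheme \<Rightarrow> 'r \<Rightarrow> bool" where
  "regular_elem R a \<longleftrightarrow> a \<in> carrier R \<and>
     (\<forall>x\<in>carrier R. (x \<otimes>\<^bsub>R\<^esub> a = \<zero>\<^bsub>R\<^esub> \<longrightarrow> x = \<zero>\<^bsub>R\<^esub>) \<and> (a \<otimes>\<^bsub>R\<^esub> x = \<zero>\<^bsub>R\<^esub> \<longrightarrow> x = \<zero>\<^bsub>R\<^esub>))"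

definition right_ore_set :: "('r, 'x) ring_scheme \<Rightarrow> 'r set \<Rightarrow> bool" where
  "right_ore_set R A \<longleftrightarrow> A \<subseteq> carrier R \<and> \<one>\<^bsub>R\<^esub> \<in> A \<and>
     (\<forall>a\<in>A. \<forall>b\<in>A. a \<otimes>\<^bsub>R\<^esub> b \<in> A) \<and> (\<forall>a\<in>A. regular_elem R a) \<and>
     (\<forall>t\<in>carrier R. \<forall>a\<in>A. \<exists>t'\<in>carrier R. \<exists>a'\<in>A. t \<otimes>\<^bsub>R\<^esub> a' = a \<otimes>\<^bsub>R\<^esub> t')"

definition right_ring_of_fractions :: "('r, 'x) ring_scheme \<Rightarrow> 'r set \<Rightarrow> ('s, 'y) ring_scheme
                                        \<Rightarrow> ('r \<Rightarrow> 's) \<Rightarrow> bool" where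
  "right_ring_of_fractions R A S \<phi> \<longleftrightarrow> ring S \<and> \<phi> \<in> ring_hom R S \<and>
     (\<forall>a\<in>A. \<phi> a \<in> Units S) \<and>
     (\<forall>s\<in>carrier S. \<exists>t\<in>carrier R. \<exists>a\<in>A. s = \<phi> t \<otimes>\<^bsub>S\<^esub> inv\<^bsub>S\<^esub> (\<phi> a)) \<and>
     {t \<in> carrier R. \<phi> t = \<zero>\<^bsub>S\<^esub>} = {t \<in> carrier R. \<exists>a\<in>A. t \<otimes>\<^bsub>R\<^esub> a = \<zero>\<^bsub>R\<^esub>}"

definition torsion :: "('r, 'x) ring_scheme \<Rightarrow> 'r set \<Rightarrow> ('r, 'm, 'y) module_scheme \<Rightarrow> 'm set" where
  "torsion R A V = {v \<in> carrier V. \<exists>a\<in>A. ract V v a = \<zero>\<^bsub>V\<^esub>}"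

definition formal_sums :: "('r, 'm, 'y) module_scheme \<Rightarrow> ('s, 'z) ring_scheme \<Rightarrow> ('m \<times> 's \<Rightarrow> int) set" where
  "formal_sums V S = {c. finite {p. c p \<noteq> 0} \<and> {p. c p \<noteq> 0} \<subseteq> carrier V \<times> carrier S}"

definition fs_add :: "('p \<Rightarrow> int) \<Rightarrow> ('p \<Rightarrow> int) \<Rightarrow> ('p \<Rightarrow> int)" where
  "fs_add c d = (\<lambda>p. c p + d p)"

definition fs_sub :: "('p \<Rightarrow> int) \<Rightarrow> ('p \<Rightarrow> int) \<Rightarrow> ('p \<Rightarrow> int)" where
  "fs_sub c d = (\<lambda>p. c p - d p)"

definition delta :: "'m \<times> 's \<Rightarrow> ('m \<times> 's \<Rightarrow> int)" where
  "delta p = (\<lambda>q. if q = p then 1 else 0)"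

definition tensor_gens :: "('r, 'x) ring_scheme \<Rightarrow> ('s, 'z) ring_scheme \<Rightarrow> ('r \<Rightarrow> 's)
                           \<Rightarrow> ('r, 'm, 'y) module_scheme \<Rightarrow> ('m \<times> 's \<Rightarrow> int) set" where
  "tensor_gens R S \<phi> V =
     {fs_sub (fs_sub (delta (v \<oplus>\<^bsub>V\<^esub> v', s)) (delta (v, s))) (delta (v', s)) | v v' s.
        v \<in> carrier V \<and> v' \<in> carrier V \<and> s \<in> carrier S} \<union>
     {fs_sub (fs_sub (delta (v, s \<oplus>\<^bsub>S\<^esub> s')) (delta (v, s))) (delta (v, s')) | v s s'.
        v \<in> carrier V \<and> s \<in> carrier S \<and> s' \<in> carrier S} \<union>
     {fs_sub (delta (ract V v t, s)) (delta (v, \<phi> t \<otimes>\<^bsub>S\<^esub> s)) | v t s.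
        v \<in> carrier V \<and> t \<in> carrier R \<and> s \<in> carrier S}"

inductive_set tensor_rel :: "('r, 'x) ring_scheme \<Rightarrow> ('s, 'z) ring_scheme \<Rightarrow> ('r \<Rightarrow> 's)
                             \<Rightarrow> ('r, 'm, 'y) module_scheme \<Rightarrow> ('m \<times> 's \<Rightarrow> int) set"
  for R S \<phi> V where
    zero: "(\<lambda>_. 0) \<in> tensor_rel R S \<phi> V"
  | plus: "c \<in> tensor_rel R S \<phi> V \<Longrightarrow> g \<in> tensor_gens R S \<phi> V \<Longrightarrow> fs_add c g \<in> tensor_rel R S \<phi> V"
  | minus: "c \<in> tensor_rel R S \<phi> V \<Longrightarrow> g \<in> tensor_gens R S \<phi> V \<Longrightarrow> fs_sub c g \<in> tensor_rel R S \<phi> V"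

text \<open>Right S-action on formal sums: (v, s) \<cdot> s' = (v, s s').\<close>
definition fs_act :: "('s, 'z) ring_scheme \<Rightarrow> ('m \<times> 's \<Rightarrow> int) \<Rightarrow> 's \<Rightarrow> ('m \<times> 's \<Rightarrow> int)" where
  "fs_act S c s' = (\<lambda>(v, u). \<Sum>s\<in>{s. c (v, s) \<noteq> 0 \<and> s \<otimes>\<^bsub>S\<^esub> s' = u}. c (v, s))"

text \<open>The free right S-module of formal sums; V \<otimes>_R S is its quotient by tensor_rel.\<close>
definition tensor_free :: "('r, 'x) ring_scheme \<Rightarrow> ('s, 'z) ring_scheme \<Rightarrow> ('r \<Rightarrow> 's)
                           \<Rightarrow> ('r, 'm, 'y) module_scheme \<Rightarrow> ('s, 'm \<times> 's \<Rightarrow> int) module" where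
  "tensor_free R S \<phi> V = \<lparr>carrier = formal_sums V S, mult = (\<lambda>c d. c), one = (\<lambda>_. 0),
      zero = (\<lambda>_. 0), add = fs_add, smult = (\<lambda>s c. fs_act S c s)\<rparr>"

end

theory Submission
  imports Defs
begin

(*
  Write S for the right ring of fractions of T at A.  The injective hull E' of V/\<tau>(V) has no
  A-torsion and is A-divisible, so its T-action extends uniquely to S.  Evaluating v \<otimes> s \<mapsto> g(v) s on V \<otimes> S then shows that \<iota> : V \<rightarrow> E, v \<mapsto> v \<otimes> 1, and g : V \<rightarrow> E'
  have the same kernel \<tau>(V), so \<iota>(v) \<mapsto> g(v) is an injective T-linear map \<iota>(V) \<rightarrow> E'.

  Given finitely many X \<subseteq> E, injectivity of E' extends this map to a T-linear \<psi> on a T-submodule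
  M \<supseteq> \<iota>(V) \<union> X.  The extension is still injective, because the image of \<beta> is essential in E and
  each of its elements has a multiple by A in \<iota>(V).  If E' is locally Artinian, the part P of M
  mapped into the T-span of \<psi>(X) is Artinian; every element of the S-span of X has a multiple by A
  in P, so descending chains of S-submodules of that span are determined by their traces on P.
*)

section \<open>Right modules and linear maps\<close>

lemma (in abelian_group) minus_eq_zero_imp_eq:
  "x \<in> carrier G \<Longrightarrow> y \<in> carrier G \<Longrightarrow> x \<ominus> y = \<zero> \<Longrightarrow> x = y"
  by (metis a_minus_def add.inv_closed minus_equality minus_minus)

lemma (in abelian_group) add_eq_add_imp_minus_eq:
  assumes "x \<in> carrier G" "x' \<in> carrier G" "y \<in> carrier G" "y' \<in> carrier G"
    and "x \<oplus> y = x' \<oplus> y'"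
  shows "y \<ominus> y' = x' \<ominus> x"
proof -
  have "y \<ominus> y' = (\<ominus> x \<oplus> (x' \<oplus> y')) \<ominus> y'"
    using assms by (metis r_neg1)
  also have "\<dots> = \<ominus> x \<oplus> (x' \<oplus> (y' \<oplus> \<ominus> y'))"
    unfolding a_minus_def using assms by (simp only: a_assoc a_inv_closed a_closed)
  also have "\<dots> = x' \<ominus> x"
    unfolding a_minus_def using assms by (simp only: r_neg r_zero a_comm a_inv_closed)
  finally show ?thesis .
qed

lemma (in abelian_group) minus_eq_minus_imp_add_eq:
  assumes "a \<in> carrier G" "b \<in> carrier G" "c \<in> carrier G" "d \<in> carrier G"
    and "b \<ominus> d = c \<ominus> a"
  shows "a \<oplus> b = c \<oplus> d"
proof -
  have "b = (c \<oplus> \<ominus> a) \<oplus> d"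
    using assms unfolding a_minus_def by (metis a_assoc l_neg r_zero a_inv_closed)
  then have "a \<oplus> b = c \<oplus> ((a \<oplus> \<ominus> a) \<oplus> d)"
    using assms by (simp only: a_assoc a_lcomm a_inv_closed a_closed)
  then show ?thesis using assms by (simp only: r_neg l_zero)
qed

lemma (in abelian_group) add_add_swap:
  "a \<in> carrier G \<Longrightarrow> b \<in> carrier G \<Longrightarrow> c \<in> carrier G \<Longrightarrow> d \<in> carrier G \<Longrightarrow>
   (a \<oplus> b) \<oplus> (c \<oplus> d) = (a \<oplus> c) \<oplus> (b \<oplus> d)"
  by (simp only: a_assoc a_lcomm a_closed)

lemma (in abelian_group) minus_minus_eq_zero_iff:
  "x \<in> carrier G \<Longrightarrow> y \<in> carrier G \<Longrightarrow> z \<in> carrier G \<Longrightarrow>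
   x \<ominus> y \<ominus> z = \<zero> \<longleftrightarrow> x = y \<oplus> z"
proof -
  assume c: "x \<in> carrier G" "y \<in> carrier G" "z \<in> carrier G"
  have split: "x \<ominus> y \<ominus> z = x \<ominus> (y \<oplus> z)" using c by (simp add: a_minus_def a_assoc minus_add)
  show ?thesis
  proof
    assume "x \<ominus> y \<ominus> z = \<zero>"
    then have eq0: "x \<ominus> (y \<oplus> z) = \<zero>" using split by simp
    show "x = y \<oplus> z" by (rule minus_eq_zero_imp_eq[OF c(1) _ eq0]) (use c in simp)
  next
    assume "x = y \<oplus> z"
    then show "x \<ominus> y \<ominus> z = \<zero>" using c split by (simp add: a_minus_def r_neg)
  qed
qed

lemma submodD:
  assumes "submod R M N"
  shows "N \<subseteq> carrier M" "\<zero>\<^bsub>M\<^esub> \<in> N" "\<And>v w. v \<in> N \<Longrightarrow> w \<in> N \<Longrightarrow> v \<oplus>\<^bsub>M\<^esub> w \<in> N"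
    "\<And>v. v \<in> N \<Longrightarrow> \<ominus>\<^bsub>M\<^esub> v \<in> N" "\<And>v r. v \<in> N \<Longrightarrow> r \<in> carrier R \<Longrightarrow> ract M v r \<in> N"
  using assms unfolding submod_def by auto

lemma submod_minus: "submod R M N \<Longrightarrow> x \<in> N \<Longrightarrow> y \<in> N \<Longrightarrow> x \<ominus>\<^bsub>M\<^esub> y \<in> N"
  unfolding submod_def a_minus_def by auto

lemma rreg_simps [simp]:
  "carrier (rreg R) = carrier R" "zero (rreg R) = zero R" "add (rreg R) = add R"
  "ract (rreg R) v r = v \<otimes>\<^bsub>R\<^esub> r"
  by (auto simp: rreg_def ract_def)

lemma rreg_right_module: "ring R \<Longrightarrow> right_module R (rreg R)"
proof -
  assume "ring R"
  then interpret R: ring R .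
  have "abelian_group (rreg R)"
    by (rule abelian_groupI) (auto simp: R.a_ac intro: R.l_neg)
  then show ?thesis
    unfolding right_module_def by (auto simp: R.l_distr R.r_distr R.m_assoc \<open>ring R\<close>)
qed

locale right_mod =
  fixes R :: "('r, 'x) ring_scheme" and M :: "('r, 'm, 'y) module_scheme"
  assumes right_module: "right_module R M"
begin

sublocale R: ring R using right_module unfolding right_module_def by auto
sublocale M: abelian_group M using right_module unfolding right_module_def by auto

lemma ract_closed [simp, intro]: "v \<in> carrier M \<Longrightarrow> r \<in> carrier R \<Longrightarrow> ract M v r \<in> carrier M"
  using right_module unfolding right_module_def by auto

lemma ract_add_l:
  "v \<in> carrier M \<Longrightarrow> w \<in> carrier M \<Longrightarrow> r \<in> carrier R \<Longrightarrow>
   ract M (v \<oplus>\<^bsub>M\<^esub> w) r = ract M v r \<oplus>\<^bsub>M\<^esub> ract M w r"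
  using right_module unfolding right_module_def by auto

lemma ract_add_r:
  "v \<in> carrier M \<Longrightarrow> r \<in> carrier R \<Longrightarrow> s \<in> carrier R \<Longrightarrow>
   ract M v (r \<oplus>\<^bsub>R\<^esub> s) = ract M v r \<oplus>\<^bsub>M\<^esub> ract M v s"
  using right_module unfolding right_module_def by auto

lemma ract_mult:
  "v \<in> carrier M \<Longrightarrow> r \<in> carrier R \<Longrightarrow> s \<in> carrier R \<Longrightarrow>
   ract M v (r \<otimes>\<^bsub>R\<^esub> s) = ract M (ract M v r) s"
  using right_module unfolding right_module_def by auto

lemma ract_one [simp]: "v \<in> carrier M \<Longrightarrow> ract M v \<one>\<^bsub>R\<^esub> = v"
  using right_module unfolding right_module_def by auto

lemma ract_zero_r [simp]: "v \<in> carrier M \<Longrightarrow> ract M v \<zero>\<^bsub>R\<^esub> = \<zero>\<^bsub>M\<^esub>"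
  using M.add.l_cancel_one[of "ract M v \<zero>\<^bsub>R\<^esub>" "ract M v \<zero>\<^bsub>R\<^esub>"]
  by (auto simp: ract_add_r[symmetric])

lemma ract_zero_l [simp]: "r \<in> carrier R \<Longrightarrow> ract M \<zero>\<^bsub>M\<^esub> r = \<zero>\<^bsub>M\<^esub>"
  using M.add.l_cancel_one[of "ract M \<zero>\<^bsub>M\<^esub> r" "ract M \<zero>\<^bsub>M\<^esub> r"]
  by (auto simp: ract_add_l[symmetric])

lemma ract_neg_l: "v \<in> carrier M \<Longrightarrow> r \<in> carrier R \<Longrightarrow> ract M (\<ominus>\<^bsub>M\<^esub> v) r = \<ominus>\<^bsub>M\<^esub> ract M v r"
  by (rule M.minus_equality[symmetric]) (auto simp: ract_add_l[symmetric] M.l_neg)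

lemma ract_neg_r: "v \<in> carrier M \<Longrightarrow> r \<in> carrier R \<Longrightarrow> ract M v (\<ominus>\<^bsub>R\<^esub> r) = \<ominus>\<^bsub>M\<^esub> ract M v r"
  by (rule M.minus_equality[symmetric]) (auto simp: ract_add_r[symmetric] R.l_neg)

lemma ract_minus_l:
  "v \<in> carrier M \<Longrightarrow> w \<in> carrier M \<Longrightarrow> r \<in> carrier R \<Longrightarrow>
   ract M (v \<ominus>\<^bsub>M\<^esub> w) r = ract M v r \<ominus>\<^bsub>M\<^esub> ract M w r"
  by (simp add: a_minus_def ract_add_l ract_neg_l)

lemma ract_minus_r:
  "v \<in> carrier M \<Longrightarrow> r \<in> carrier R \<Longrightarrow> s \<in> carrier R \<Longrightarrow>
   ract M v (r \<ominus>\<^bsub>R\<^esub> s) = ract M v r \<ominus>\<^bsub>M\<^esub> ract M v s"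
  by (simp add: a_minus_def ract_add_r ract_neg_r)

lemma carrier_submod: "submod R M (carrier M)"
  unfolding submod_def by auto

lemma gen_submod_submod: "X \<subseteq> carrier M \<Longrightarrow> submod R M (gen_submod R M X)"
  unfolding gen_submod_def submod_def using carrier_submod by (auto simp: submod_def)

lemma gen_submod_incl: "X \<subseteq> carrier M \<Longrightarrow> X \<subseteq> gen_submod R M X"
  unfolding gen_submod_def using carrier_submod by auto

lemma gen_submod_least: "submod R M N \<Longrightarrow> X \<subseteq> N \<Longrightarrow> gen_submod R M X \<subseteq> N"
  unfolding gen_submod_def by auto

lemma cyclic_submod:
  assumes x: "x \<in> carrier M"
  shows "submod R M {ract M x r | r. r \<in> carrier R}" (is "submod R M ?xR")
  unfolding submod_def
proof (intro conjI ballI)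
  show "\<zero>\<^bsub>M\<^esub> \<in> ?xR" using x by (intro CollectI exI[of _ "\<zero>\<^bsub>R\<^esub>"]) auto
next
  fix v w assume "v \<in> ?xR" "w \<in> ?xR"
  then obtain r r' where "v = ract M x r" "w = ract M x r'" "r \<in> carrier R" "r' \<in> carrier R" by auto
  then show "v \<oplus>\<^bsub>M\<^esub> w \<in> ?xR"
    using x by (intro CollectI exI[of _ "r \<oplus>\<^bsub>R\<^esub> r'"]) (auto simp: ract_add_r)
next
  fix v assume "v \<in> ?xR"
  then obtain r where "v = ract M x r" "r \<in> carrier R" by auto
  then show "\<ominus>\<^bsub>M\<^esub> v \<in> ?xR"
    using x by (intro CollectI exI[of _ "\<ominus>\<^bsub>R\<^esub> r"]) (auto simp: ract_neg_r)
next
  fix v s assume "v \<in> ?xR" "s \<in> carrier R"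
  then obtain r where "v = ract M x r" "r \<in> carrier R" by auto
  then show "ract M v s \<in> ?xR"
    using x \<open>s \<in> carrier R\<close> by (intro CollectI exI[of _ "r \<otimes>\<^bsub>R\<^esub> s"]) (auto simp: ract_mult)
qed (use x in auto)


definition add_cyclic :: "'m set \<Rightarrow> 'm \<Rightarrow> 'm set" where
  "add_cyclic P m = {x \<oplus>\<^bsub>M\<^esub> ract M m r | x r. x \<in> P \<and> r \<in> carrier R}"

lemma add_cyclic_submod:
  assumes P: "submod R M P" and m: "m \<in> carrier M"
  shows "submod R M (add_cyclic P m)"
proof -
  let ?C = "{x \<oplus>\<^bsub>M\<^esub> ract M m r | x r. x \<in> P \<and> r \<in> carrier R}"
  note Pc = submodD(1)[OF P, THEN subsetD]
  show ?thesis
    unfolding submod_def add_cyclic_def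
  proof (intro conjI ballI)
    show "\<zero>\<^bsub>M\<^esub> \<in> ?C"
      using m submodD(2)[OF P] by (intro CollectI exI[of _ "\<zero>\<^bsub>M\<^esub>"] exI[of _ "\<zero>\<^bsub>R\<^esub>"]) auto
  next
    fix v w assume "v \<in> ?C" "w \<in> ?C"
    then obtain x r x' r' where "v = x \<oplus>\<^bsub>M\<^esub> ract M m r" "w = x' \<oplus>\<^bsub>M\<^esub> ract M m r'"
      and xr: "x \<in> P" "r \<in> carrier R" "x' \<in> P" "r' \<in> carrier R" by auto
    moreover have "v \<oplus>\<^bsub>M\<^esub> w = (x \<oplus>\<^bsub>M\<^esub> x') \<oplus>\<^bsub>M\<^esub> ract M m (r \<oplus>\<^bsub>R\<^esub> r')"
      using calculation m Pc by (simp add: ract_add_r M.a_ac)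
    ultimately show "v \<oplus>\<^bsub>M\<^esub> w \<in> ?C" using submodD(3)[OF P] by blast
  next
    fix v assume "v \<in> ?C"
    then obtain x r where "v = x \<oplus>\<^bsub>M\<^esub> ract M m r" "x \<in> P" "r \<in> carrier R" by auto
    moreover have "\<ominus>\<^bsub>M\<^esub> v = \<ominus>\<^bsub>M\<^esub> x \<oplus>\<^bsub>M\<^esub> ract M m (\<ominus>\<^bsub>R\<^esub> r)"
      using calculation m Pc by (simp add: M.minus_add ract_neg_r)
    ultimately show "\<ominus>\<^bsub>M\<^esub> v \<in> ?C" using submodD(4)[OF P] by blast
  next
    fix v s assume "v \<in> ?C" "s \<in> carrier R"
    then obtain x r where "v = x \<oplus>\<^bsub>M\<^esub> ract M m r" "x \<in> P" "r \<in> carrier R" by auto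
    moreover have "ract M v s = ract M x s \<oplus>\<^bsub>M\<^esub> ract M m (r \<otimes>\<^bsub>R\<^esub> s)"
      using calculation m Pc \<open>s \<in> carrier R\<close> by (simp add: ract_add_l ract_mult)
    ultimately show "ract M v s \<in> ?C" using submodD(5)[OF P] \<open>s \<in> carrier R\<close> by blast
  qed (use m Pc in auto)
qed

lemma add_cyclic_supset:
  assumes P: "submod R M P" and m: "m \<in> carrier M"
  shows "P \<subseteq> add_cyclic P m" "m \<in> add_cyclic P m"
proof -
  show "P \<subseteq> add_cyclic P m"
  proof
    fix x assume "x \<in> P"
    then have "x = x \<oplus>\<^bsub>M\<^esub> ract M m \<zero>\<^bsub>R\<^esub>" using m submodD(1)[OF P] by auto
    then show "x \<in> add_cyclic P m" unfolding add_cyclic_def using \<open>x \<in> P\<close> by blast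
  qed
  have "m = \<zero>\<^bsub>M\<^esub> \<oplus>\<^bsub>M\<^esub> ract M m \<one>\<^bsub>R\<^esub>" using m by simp
  then show "m \<in> add_cyclic P m" unfolding add_cyclic_def using submodD(2)[OF P] by blast
qed

lemma injective_divisible:
  assumes inj: "injective_mod R M" and a: "a \<in> carrier R"
    and reg: "\<And>x. x \<in> carrier R \<Longrightarrow> a \<otimes>\<^bsub>R\<^esub> x = \<zero>\<^bsub>R\<^esub> \<Longrightarrow> x = \<zero>\<^bsub>R\<^esub>"
    and e: "e \<in> carrier M"
  shows "\<exists>y\<in>carrier M. ract M y a = e"
proof -
  interpret Rreg: right_mod R "rreg R" by unfold_locales (rule rreg_right_module[OF R.ring_axioms])
  define I where "I = {a \<otimes>\<^bsub>R\<^esub> r | r. r \<in> carrier R}"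
  have I: "submod R (rreg R) I"
    using Rreg.cyclic_submod[of a] a unfolding I_def by simp
  have cancel: "r = r'" if "r \<in> carrier R" "r' \<in> carrier R" "a \<otimes>\<^bsub>R\<^esub> r = a \<otimes>\<^bsub>R\<^esub> r'" for r r'
  proof -
    have "a \<otimes>\<^bsub>R\<^esub> (r \<ominus>\<^bsub>R\<^esub> r') = a \<otimes>\<^bsub>R\<^esub> r \<ominus>\<^bsub>R\<^esub> a \<otimes>\<^bsub>R\<^esub> r'"
      using that a by (simp only: a_minus_def R.r_distr R.r_minus R.a_inv_closed)
    also have "\<dots> = \<zero>\<^bsub>R\<^esub>"
      unfolding \<open>a \<otimes>\<^bsub>R\<^esub> r = a \<otimes>\<^bsub>R\<^esub> r'\<close> a_minus_def using that a by (intro R.r_neg) auto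
    finally have "a \<otimes>\<^bsub>R\<^esub> (r \<ominus>\<^bsub>R\<^esub> r') = \<zero>\<^bsub>R\<^esub>" .
    then have "r \<ominus>\<^bsub>R\<^esub> r' = \<zero>\<^bsub>R\<^esub>" using reg[of "r \<ominus>\<^bsub>R\<^esub> r'"] that by simp
    then show ?thesis using that R.minus_eq_zero_imp_eq by blast
  qed
  define f where "f x = (THE y. \<exists>r\<in>carrier R. x = a \<otimes>\<^bsub>R\<^esub> r \<and> y = ract M e r)" for x
  have f: "f (a \<otimes>\<^bsub>R\<^esub> r) = ract M e r" if "r \<in> carrier R" for r
    unfolding f_def by (rule the_equality) (use that cancel in blast)+
  have "\<exists>m\<in>carrier M. \<forall>x\<in>I. f x = ract M m x"
  proof (rule inj[unfolded injective_mod_def, THEN conjunct2, rule_format], intro conjI I)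
    show "f \<in> I \<rightarrow> carrier M" using e by (auto simp: I_def f)
    show "\<forall>x\<in>I. \<forall>y\<in>I. f (x \<oplus>\<^bsub>R\<^esub> y) = f x \<oplus>\<^bsub>M\<^esub> f y"
      using a e by (auto simp: I_def f R.r_distr[symmetric] ract_add_r)
    show "\<forall>x\<in>I. \<forall>r\<in>carrier R. f (x \<otimes>\<^bsub>R\<^esub> r) = ract M (f x) r"
      using a e by (auto simp: I_def f R.m_assoc ract_mult)
  qed
  then obtain m where m: "m \<in> carrier M" "\<forall>x\<in>I. f x = ract M m x" by auto
  have "a \<in> I" unfolding I_def using a by (intro CollectI exI[of _ "\<one>\<^bsub>R\<^esub>"]) auto
  then have "ract M m a = f (a \<otimes>\<^bsub>R\<^esub> \<one>\<^bsub>R\<^esub>)" using m a by auto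
  then show ?thesis using m e f[of "\<one>\<^bsub>R\<^esub>"] by auto
qed

end

definition linear_on ::
  "('r, 'x) ring_scheme \<Rightarrow> ('r, 'm, 'y) module_scheme \<Rightarrow> ('r, 'n, 'z) module_scheme
   \<Rightarrow> 'm set \<Rightarrow> ('m \<Rightarrow> 'n) \<Rightarrow> bool" where
  "linear_on R M N P \<psi> \<longleftrightarrow> \<psi> \<in> P \<rightarrow> carrier N \<and>
     (\<forall>x\<in>P. \<forall>y\<in>P. \<psi> (x \<oplus>\<^bsub>M\<^esub> y) = \<psi> x \<oplus>\<^bsub>N\<^esub> \<psi> y) \<and>
     (\<forall>x\<in>P. \<forall>r\<in>carrier R. \<psi> (ract M x r) = ract N (\<psi> x) r)"

lemma rhom_closed: "rhom R M N f \<Longrightarrow> v \<in> carrier M \<Longrightarrow> f v \<in> carrier N"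
  unfolding rhom_def by auto

lemma linear_onD:
  assumes "linear_on R M N P \<psi>"
  shows "\<And>x. x \<in> P \<Longrightarrow> \<psi> x \<in> carrier N"
    "\<And>x y. x \<in> P \<Longrightarrow> y \<in> P \<Longrightarrow> \<psi> (x \<oplus>\<^bsub>M\<^esub> y) = \<psi> x \<oplus>\<^bsub>N\<^esub> \<psi> y"
    "\<And>x r. x \<in> P \<Longrightarrow> r \<in> carrier R \<Longrightarrow> \<psi> (ract M x r) = ract N (\<psi> x) r"
  using assms unfolding linear_on_def by auto

lemma linear_on_subset: "linear_on R M N P \<psi> \<Longrightarrow> Q \<subseteq> P \<Longrightarrow> linear_on R M N Q \<psi>"
  unfolding linear_on_def by blast

locale right_mod_pair = M: right_mod R M + N: right_mod R N
  for R :: "('r, 'x) ring_scheme" and M :: "('r, 'm, 'y) module_scheme"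
    and N :: "('r, 'n, 'z) module_scheme"
begin

lemma linear_on_neg:
  assumes \<psi>: "linear_on R M N P \<psi>" and P: "submod R M P" and x: "x \<in> P"
  shows "\<psi> (\<ominus>\<^bsub>M\<^esub> x) = \<ominus>\<^bsub>N\<^esub> \<psi> x"
proof -
  have "x \<in> carrier M" using P x by (auto dest: submodD(1))
  then have "\<psi> (\<ominus>\<^bsub>M\<^esub> x) = \<psi> (ract M x (\<ominus>\<^bsub>R\<^esub> \<one>\<^bsub>R\<^esub>))" by (simp add: M.ract_neg_r)
  also have "\<dots> = \<ominus>\<^bsub>N\<^esub> \<psi> x" using linear_onD[OF \<psi>] x by (simp add: N.ract_neg_r)
  finally show ?thesis .
qed

lemma linear_on_minus:
  assumes "linear_on R M N P \<psi>" "submod R M P" "x \<in> P" "y \<in> P"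
  shows "\<psi> (x \<ominus>\<^bsub>M\<^esub> y) = \<psi> x \<ominus>\<^bsub>N\<^esub> \<psi> y"
  using assms linear_onD(2)[OF assms(1)] submodD(4)[OF assms(2)] linear_on_neg
  by (simp add: a_minus_def)

lemma linear_on_zero:
  assumes "linear_on R M N P \<psi>" "submod R M P"
  shows "\<psi> \<zero>\<^bsub>M\<^esub> = \<zero>\<^bsub>N\<^esub>"
  using linear_onD(1)[OF assms(1), of "\<zero>\<^bsub>M\<^esub>"] linear_onD(3)[OF assms(1), of "\<zero>\<^bsub>M\<^esub>" "\<zero>\<^bsub>R\<^esub>"]
    submodD(2)[OF assms(2)]
  by simp

lemma linear_on_inj_on:
  assumes \<psi>: "linear_on R M N P \<psi>" and P: "submod R M P"
    and ker: "\<And>x. x \<in> P \<Longrightarrow> \<psi> x = \<zero>\<^bsub>N\<^esub> \<Longrightarrow> x = \<zero>\<^bsub>M\<^esub>"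
  shows "inj_on \<psi> P"
proof (rule inj_onI)
  fix x y assume xy: "x \<in> P" "y \<in> P" "\<psi> x = \<psi> y"
  have "\<psi> (x \<ominus>\<^bsub>M\<^esub> y) = \<zero>\<^bsub>N\<^esub>"
    using xy linear_on_minus[OF \<psi> P] linear_onD(1)[OF \<psi>] by (simp add: a_minus_def N.M.r_neg)
  then have "x \<ominus>\<^bsub>M\<^esub> y = \<zero>\<^bsub>M\<^esub>" using ker submod_minus[OF P] xy by blast
  then show "x = y" using xy submodD(1)[OF P] M.M.minus_eq_zero_imp_eq by blast
qed

lemma linear_on_image_submod:
  assumes \<psi>: "linear_on R M N P \<psi>" and K: "submod R M K" and KP: "K \<subseteq> P"
  shows "submod R N (\<psi> ` K)"
proof -
  note \<psi>K = linear_on_subset[OF \<psi> KP]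
  show ?thesis
    unfolding submod_def
  proof (intro conjI ballI)
    show "\<psi> ` K \<subseteq> carrier N" using linear_onD(1)[OF \<psi>K] by blast
    show "\<zero>\<^bsub>N\<^esub> \<in> \<psi> ` K" using linear_on_zero[OF \<psi>K K] submodD(2)[OF K] by force
  next
    fix v w assume "v \<in> \<psi> ` K" "w \<in> \<psi> ` K"
    then obtain x y where "x \<in> K" "y \<in> K" "v = \<psi> x" "w = \<psi> y" by blast
    then show "v \<oplus>\<^bsub>N\<^esub> w \<in> \<psi> ` K"
      using linear_onD(2)[OF \<psi>K] submodD(3)[OF K] by (intro image_eqI[of _ _ "x \<oplus>\<^bsub>M\<^esub> y"]) auto
  next
    fix v assume "v \<in> \<psi> ` K"
    then obtain x where "x \<in> K" "v = \<psi> x" by blast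
    then show "\<ominus>\<^bsub>N\<^esub> v \<in> \<psi> ` K"
      using linear_on_neg[OF \<psi>K K] submodD(4)[OF K] by (intro image_eqI[of _ _ "\<ominus>\<^bsub>M\<^esub> x"]) auto
  next
    fix v r assume "v \<in> \<psi> ` K" "r \<in> carrier R"
    then obtain x where "x \<in> K" "v = \<psi> x" by blast
    then show "ract N v r \<in> \<psi> ` K"
      using linear_onD(3)[OF \<psi>K] submodD(5)[OF K] \<open>r \<in> carrier R\<close>
      by (intro image_eqI[of _ _ "ract M x r"]) auto
  qed
qed

lemma linear_on_preimage_submod:
  assumes \<psi>: "linear_on R M N P \<psi>" and P: "submod R M P" and G: "submod R N G"
  shows "submod R M {x \<in> P. \<psi> x \<in> G}"
  unfolding submod_def
  using submodD[OF P] submodD[OF G] linear_onD[OF \<psi>] linear_on_zero[OF \<psi> P] linear_on_neg[OF \<psi> P]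
  by auto

lemma artinian_submod_inj_on:
  assumes \<psi>: "linear_on R M N P \<psi>" and inj: "inj_on \<psi> P"
    and G: "artinian_submod R N G" and PG: "\<psi> ` P \<subseteq> G"
  shows "artinian_submod R M P"
  unfolding artinian_submod_def
proof (intro allI impI)
  fix f :: "nat \<Rightarrow> 'm set"
  assume f: "(\<forall>n. submod R M (f n) \<and> f n \<subseteq> P) \<and> (\<forall>n. f (Suc n) \<subseteq> f n)"
  have "\<forall>n. submod R N (\<psi> ` f n) \<and> \<psi> ` f n \<subseteq> G"
    using f PG linear_on_image_submod[OF \<psi>] by blast
  moreover have "\<forall>n. \<psi> ` f (Suc n) \<subseteq> \<psi> ` f n" using f by blast
  ultimately obtain n where n: "\<forall>m\<ge>n. \<psi> ` f m = \<psi> ` f n"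
    using G unfolding artinian_submod_def by presburger
  have "f m = f n" if "m \<ge> n" for m
  proof -
    have "f m \<subseteq> f n" using f lift_Suc_antimono_le[of f] that by blast
    moreover have "f m \<subseteq> P" "f n \<subseteq> P" using f by auto
    ultimately show ?thesis using n that inj inj_on_image_eq_iff by metis
  qed
  then show "\<exists>n. \<forall>m\<ge>n. f m = f n" by blast
qed


lemma injective_extends_along_element:
  assumes inj: "injective_mod R N" and P: "submod R M P" and \<psi>: "linear_on R M N P \<psi>"
    and m: "m \<in> carrier M"
  shows "\<exists>e\<in>carrier N. \<forall>r\<in>carrier R. ract M m r \<in> P \<longrightarrow> \<psi> (ract M m r) = ract N e r"
proof -
  interpret Rreg: right_mod_pair R "rreg R" M
    by unfold_locales (rule rreg_right_module[OF M.R.ring_axioms])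
  define I where "I = {r \<in> carrier R. ract M m r \<in> P}"
  have mR: "linear_on R (rreg R) M (carrier R) (\<lambda>r. ract M m r)"
    unfolding linear_on_def using m by (auto simp: M.ract_add_r M.ract_mult)
  have I: "submod R (rreg R) I"
    using Rreg.linear_on_preimage_submod[OF mR Rreg.M.carrier_submod[simplified] P] by (simp add: I_def)
  have "\<exists>e\<in>carrier N. \<forall>r\<in>I. \<psi> (ract M m r) = ract N e r"
  proof (rule inj[unfolded injective_mod_def, THEN conjunct2, rule_format], intro conjI I)
    show "(\<lambda>r. \<psi> (ract M m r)) \<in> I \<rightarrow> carrier N" using linear_onD(1)[OF \<psi>] by (auto simp: I_def)
    show "\<forall>x\<in>I. \<forall>y\<in>I. \<psi> (ract M m (x \<oplus>\<^bsub>R\<^esub> y)) = \<psi> (ract M m x) \<oplus>\<^bsub>N\<^esub> \<psi> (ract M m y)"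
      using m linear_onD(2)[OF \<psi>] by (auto simp: I_def M.ract_add_r)
    show "\<forall>x\<in>I. \<forall>r\<in>carrier R. \<psi> (ract M m (x \<otimes>\<^bsub>R\<^esub> r)) = ract N (\<psi> (ract M m x)) r"
      using m linear_onD(3)[OF \<psi>] by (auto simp: I_def M.ract_mult)
  qed
  then show ?thesis unfolding I_def by blast
qed

definition cyclic_ext :: "'m set \<Rightarrow> ('m \<Rightarrow> 'n) \<Rightarrow> 'm \<Rightarrow> 'n \<Rightarrow> 'm \<Rightarrow> 'n" where
  "cyclic_ext P \<psi> m e y = (THE z. \<exists>x\<in>P. \<exists>r\<in>carrier R.
     y = x \<oplus>\<^bsub>M\<^esub> ract M m r \<and> z = \<psi> x \<oplus>\<^bsub>N\<^esub> ract N e r)"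

context
  fixes P \<psi> m e
  assumes P: "submod R M P" and \<psi>: "linear_on R M N P \<psi>" and m: "m \<in> carrier M"
    and e: "e \<in> carrier N"
    and e_ext: "\<And>r. r \<in> carrier R \<Longrightarrow> ract M m r \<in> P \<Longrightarrow> \<psi> (ract M m r) = ract N e r"
begin

lemma cyclic_ext_well_defined:
  assumes x: "x \<in> P" "x' \<in> P" and r: "r \<in> carrier R" "r' \<in> carrier R"
    and eq: "x \<oplus>\<^bsub>M\<^esub> ract M m r = x' \<oplus>\<^bsub>M\<^esub> ract M m r'"
  shows "\<psi> x \<oplus>\<^bsub>N\<^esub> ract N e r = \<psi> x' \<oplus>\<^bsub>N\<^esub> ract N e r'"
proof -
  note Pc = submodD(1)[OF P, THEN subsetD]
  have "ract M m (r \<ominus>\<^bsub>R\<^esub> r') = ract M m r \<ominus>\<^bsub>M\<^esub> ract M m r'"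
    using m r by (simp add: M.ract_minus_r)
  also have "\<dots> = x' \<ominus>\<^bsub>M\<^esub> x"
    by (rule M.M.add_eq_add_imp_minus_eq) (use x r m eq Pc in auto)
  finally have diff: "ract M m (r \<ominus>\<^bsub>R\<^esub> r') = x' \<ominus>\<^bsub>M\<^esub> x" .
  then have "ract N e r \<ominus>\<^bsub>N\<^esub> ract N e r' = \<psi> x' \<ominus>\<^bsub>N\<^esub> \<psi> x"
    using e_ext[of "r \<ominus>\<^bsub>R\<^esub> r'"] submod_minus[OF P] linear_on_minus[OF \<psi> P] x r e
    by (simp add: N.ract_minus_r)
  then show ?thesis
    by (rule N.M.minus_eq_minus_imp_add_eq[rotated 4]) (use x r e linear_onD(1)[OF \<psi>] in auto)
qed

lemma cyclic_ext_eq: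
  assumes "x \<in> P" "r \<in> carrier R"
  shows "cyclic_ext P \<psi> m e (x \<oplus>\<^bsub>M\<^esub> ract M m r) = \<psi> x \<oplus>\<^bsub>N\<^esub> ract N e r"
  unfolding cyclic_ext_def
proof (rule the_equality)
  fix z assume "\<exists>x'\<in>P. \<exists>r'\<in>carrier R.
    x \<oplus>\<^bsub>M\<^esub> ract M m r = x' \<oplus>\<^bsub>M\<^esub> ract M m r' \<and> z = \<psi> x' \<oplus>\<^bsub>N\<^esub> ract N e r'"
  then obtain x' r' where "x' \<in> P" "r' \<in> carrier R"
    "x \<oplus>\<^bsub>M\<^esub> ract M m r = x' \<oplus>\<^bsub>M\<^esub> ract M m r'" "z = \<psi> x' \<oplus>\<^bsub>N\<^esub> ract N e r'"
    by blast
  then show "z = \<psi> x \<oplus>\<^bsub>N\<^esub> ract N e r" using cyclic_ext_well_defined assms by metis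
qed (use assms in blast)

lemma linear_on_cyclic_ext: "linear_on R M N (M.add_cyclic P m) (cyclic_ext P \<psi> m e)"
  unfolding linear_on_def
proof (intro conjI ballI funcsetI)
  note Pc = submodD(1)[OF P, THEN subsetD] and \<psi>c = linear_onD(1)[OF \<psi>]
  fix y assume "y \<in> M.add_cyclic P m"
  then obtain x r where y: "y = x \<oplus>\<^bsub>M\<^esub> ract M m r" "x \<in> P" "r \<in> carrier R"
    unfolding M.add_cyclic_def by blast
  show "cyclic_ext P \<psi> m e y \<in> carrier N" using y e \<psi>c by (simp add: cyclic_ext_eq)
  fix s assume s: "s \<in> carrier R"
  have "ract M y s = ract M x s \<oplus>\<^bsub>M\<^esub> ract M m (r \<otimes>\<^bsub>R\<^esub> s)"
    using y s m Pc by (simp add: M.ract_add_l M.ract_mult)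
  then show "cyclic_ext P \<psi> m e (ract M y s) = ract N (cyclic_ext P \<psi> m e y) s"
    using y s e \<psi>c submodD(5)[OF P] linear_onD(3)[OF \<psi>]
    by (simp add: cyclic_ext_eq N.ract_add_l N.ract_mult)
next
  note Pc = submodD(1)[OF P, THEN subsetD] and \<psi>c = linear_onD(1)[OF \<psi>]
  fix y y' assume "y \<in> M.add_cyclic P m" "y' \<in> M.add_cyclic P m"
  then obtain x r x' r' where y: "y = x \<oplus>\<^bsub>M\<^esub> ract M m r" "x \<in> P" "r \<in> carrier R"
    and y': "y' = x' \<oplus>\<^bsub>M\<^esub> ract M m r'" "x' \<in> P" "r' \<in> carrier R"
    unfolding M.add_cyclic_def by blast
  have "y \<oplus>\<^bsub>M\<^esub> y' = (x \<oplus>\<^bsub>M\<^esub> x') \<oplus>\<^bsub>M\<^esub> ract M m (r \<oplus>\<^bsub>R\<^esub> r')"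
    using y y' m Pc by (simp add: M.ract_add_r M.M.a_ac)
  then have "cyclic_ext P \<psi> m e (y \<oplus>\<^bsub>M\<^esub> y') = (\<psi> x \<oplus>\<^bsub>N\<^esub> \<psi> x') \<oplus>\<^bsub>N\<^esub> (ract N e r \<oplus>\<^bsub>N\<^esub> ract N e r')"
    using y y' e submodD(3)[OF P] linear_onD(2)[OF \<psi>] by (simp add: cyclic_ext_eq N.ract_add_r)
  also have "\<dots> = (\<psi> x \<oplus>\<^bsub>N\<^esub> ract N e r) \<oplus>\<^bsub>N\<^esub> (\<psi> x' \<oplus>\<^bsub>N\<^esub> ract N e r')"
    using y y' e \<psi>c by (intro N.M.add_add_swap) auto
  finally show "cyclic_ext P \<psi> m e (y \<oplus>\<^bsub>M\<^esub> y') = cyclic_ext P \<psi> m e y \<oplus>\<^bsub>N\<^esub> cyclic_ext P \<psi> m e y'"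
    using y y' by (simp add: cyclic_ext_eq)
qed

lemma cyclic_ext_extends: "x \<in> P \<Longrightarrow> cyclic_ext P \<psi> m e x = \<psi> x"
  using cyclic_ext_eq[of x "\<zero>\<^bsub>R\<^esub>"] submodD(1)[OF P] m e linear_onD(1)[OF \<psi>] by auto

end

lemma injective_linear_extension:
  assumes inj: "injective_mod R N" and P: "submod R M P" and \<psi>: "linear_on R M N P \<psi>"
    and X: "finite X" "X \<subseteq> carrier M"
  shows "\<exists>P' \<psi>'. submod R M P' \<and> P \<subseteq> P' \<and> X \<subseteq> P' \<and> linear_on R M N P' \<psi>' \<and>
    (\<forall>x\<in>P. \<psi>' x = \<psi> x)"
  using X
proof (induction X rule: finite_induct)
  case empty
  show ?case using P \<psi> by blast
next
  case (insert m X)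
  then obtain P1 \<psi>1 where P1: "submod R M P1" "P \<subseteq> P1" "X \<subseteq> P1" "linear_on R M N P1 \<psi>1"
    and \<psi>1: "\<forall>x\<in>P. \<psi>1 x = \<psi> x"
    by auto
  have m: "m \<in> carrier M" using insert.prems by simp
  obtain e where e: "e \<in> carrier N"
    and e_ext: "\<forall>r\<in>carrier R. ract M m r \<in> P1 \<longrightarrow> \<psi>1 (ract M m r) = ract N e r"
    using injective_extends_along_element[OF inj P1(1) P1(4) m] by blast
  have "submod R M (M.add_cyclic P1 m)" "P \<subseteq> M.add_cyclic P1 m" "insert m X \<subseteq> M.add_cyclic P1 m"
    using P1 M.add_cyclic_submod[OF P1(1) m] M.add_cyclic_supset[OF P1(1) m] by auto
  moreover have "linear_on R M N (M.add_cyclic P1 m) (cyclic_ext P1 \<psi>1 m e)"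
    by (rule linear_on_cyclic_ext[OF P1(1,4) m e e_ext[rule_format]])
  moreover have "\<forall>x\<in>P. cyclic_ext P1 \<psi>1 m e x = \<psi> x"
    using cyclic_ext_extends[OF P1(1,4) m e e_ext[rule_format]] \<psi>1 P1(2) by auto
  ultimately show ?case by blast
qed

end

section \<open>Right rings of fractions\<close>

locale ore_frac =
  fixes T :: "('r, 'x) ring_scheme" and A :: "'r set"
    and S :: "('s, 'y) ring_scheme" and \<phi> :: "'r \<Rightarrow> 's"
  assumes ring_T: "ring T" and ore: "right_ore_set T A"
    and frac: "right_ring_of_fractions T A S \<phi>"
begin

sublocale T: ring T by (rule ring_T)
sublocale S: ring S using frac unfolding right_ring_of_fractions_def by blast

lemma phi_hom: "\<phi> \<in> ring_hom T S"
  using frac unfolding right_ring_of_fractions_def by blast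

lemma phi_closed [simp]: "t \<in> carrier T \<Longrightarrow> \<phi> t \<in> carrier S"
  using phi_hom by (rule ring_hom_closed)

lemma phi_mult: "t \<in> carrier T \<Longrightarrow> u \<in> carrier T \<Longrightarrow> \<phi> (t \<otimes>\<^bsub>T\<^esub> u) = \<phi> t \<otimes>\<^bsub>S\<^esub> \<phi> u"
  using phi_hom by (rule ring_hom_mult)

lemma phi_add: "t \<in> carrier T \<Longrightarrow> u \<in> carrier T \<Longrightarrow> \<phi> (t \<oplus>\<^bsub>T\<^esub> u) = \<phi> t \<oplus>\<^bsub>S\<^esub> \<phi> u"
  using phi_hom by (rule ring_hom_add)

lemma phi_one [simp]: "\<phi> \<one>\<^bsub>T\<^esub> = \<one>\<^bsub>S\<^esub>"
  using phi_hom by (rule ring_hom_one)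

lemma phi_zero [simp]: "\<phi> \<zero>\<^bsub>T\<^esub> = \<zero>\<^bsub>S\<^esub>"
  using ring_hom_zero[OF phi_hom T.ring_axioms S.ring_axioms] .

lemma phi_neg: "t \<in> carrier T \<Longrightarrow> \<phi> (\<ominus>\<^bsub>T\<^esub> t) = \<ominus>\<^bsub>S\<^esub> \<phi> t"
  by (rule S.minus_equality[symmetric]) (auto simp: phi_add[symmetric] T.l_neg)

lemma phi_minus: "t \<in> carrier T \<Longrightarrow> u \<in> carrier T \<Longrightarrow> \<phi> (t \<ominus>\<^bsub>T\<^esub> u) = \<phi> t \<ominus>\<^bsub>S\<^esub> \<phi> u"
  by (simp add: a_minus_def phi_add phi_neg)

lemma A_carrier [simp]: "a \<in> A \<Longrightarrow> a \<in> carrier T"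
  using ore unfolding right_ore_set_def by auto

lemma one_in_A: "\<one>\<^bsub>T\<^esub> \<in> A"
  using ore unfolding right_ore_set_def by auto

lemma A_mult_closed: "a \<in> A \<Longrightarrow> b \<in> A \<Longrightarrow> a \<otimes>\<^bsub>T\<^esub> b \<in> A"
  using ore unfolding right_ore_set_def by auto

lemma A_regular: "a \<in> A \<Longrightarrow> regular_elem T a"
  using ore unfolding right_ore_set_def by auto

lemma ore_condition:
  "t \<in> carrier T \<Longrightarrow> a \<in> A \<Longrightarrow> \<exists>t'\<in>carrier T. \<exists>a'\<in>A. t \<otimes>\<^bsub>T\<^esub> a' = a \<otimes>\<^bsub>T\<^esub> t'"
  using ore unfolding right_ore_set_def by auto

lemma ore_common_multiple:
  assumes "a \<in> A" "b \<in> A"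
  obtains u v c where "u \<in> carrier T" "v \<in> carrier T" "c \<in> A"
    "c = a \<otimes>\<^bsub>T\<^esub> u" "c = b \<otimes>\<^bsub>T\<^esub> v"
proof -
  obtain t' a' where "t' \<in> carrier T" "a' \<in> A" "b \<otimes>\<^bsub>T\<^esub> a' = a \<otimes>\<^bsub>T\<^esub> t'"
    using ore_condition[of b a] assms by auto
  moreover have "b \<otimes>\<^bsub>T\<^esub> a' \<in> A" using assms(2) \<open>a' \<in> A\<close> by (rule A_mult_closed)
  ultimately show ?thesis using assms by (intro that[of t' a' "b \<otimes>\<^bsub>T\<^esub> a'"]) auto
qed

lemma phi_A_unit: "a \<in> A \<Longrightarrow> \<phi> a \<in> Units S"
  using frac unfolding right_ring_of_fractions_def by auto

lemma fraction_repr: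
  "s \<in> carrier S \<Longrightarrow> \<exists>t\<in>carrier T. \<exists>a\<in>A. s = \<phi> t \<otimes>\<^bsub>S\<^esub> inv\<^bsub>S\<^esub> (\<phi> a)"
  using frac unfolding right_ring_of_fractions_def by auto

lemma phi_eq_zero_iff:
  "t \<in> carrier T \<Longrightarrow> \<phi> t = \<zero>\<^bsub>S\<^esub> \<longleftrightarrow> (\<exists>a\<in>A. t \<otimes>\<^bsub>T\<^esub> a = \<zero>\<^bsub>T\<^esub>)"
  using frac unfolding right_ring_of_fractions_def by blast

lemma inv_phi_closed [simp]: "a \<in> A \<Longrightarrow> inv\<^bsub>S\<^esub> (\<phi> a) \<in> carrier S"
  using phi_A_unit by simp

lemma phi_r_inv: "a \<in> A \<Longrightarrow> \<phi> a \<otimes>\<^bsub>S\<^esub> inv\<^bsub>S\<^esub> (\<phi> a) = \<one>\<^bsub>S\<^esub>"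
  using phi_A_unit by simp

lemma phi_l_inv: "a \<in> A \<Longrightarrow> inv\<^bsub>S\<^esub> (\<phi> a) \<otimes>\<^bsub>S\<^esub> \<phi> a = \<one>\<^bsub>S\<^esub>"
  using phi_A_unit by simp

lemma fraction_mult_denominator:
  "t \<in> carrier T \<Longrightarrow> a \<in> A \<Longrightarrow> (\<phi> t \<otimes>\<^bsub>S\<^esub> inv\<^bsub>S\<^esub> (\<phi> a)) \<otimes>\<^bsub>S\<^esub> \<phi> a = \<phi> t"
  by (simp add: S.m_assoc phi_l_inv)

lemma fraction_expand:
  assumes "t \<in> carrier T" "a \<in> A" "u \<in> carrier T" "b \<in> A" and b: "b = a \<otimes>\<^bsub>T\<^esub> u"
  shows "\<phi> t \<otimes>\<^bsub>S\<^esub> inv\<^bsub>S\<^esub> (\<phi> a) = \<phi> (t \<otimes>\<^bsub>T\<^esub> u) \<otimes>\<^bsub>S\<^esub> inv\<^bsub>S\<^esub> (\<phi> b)"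
proof -
  have tu: "(\<phi> t \<otimes>\<^bsub>S\<^esub> inv\<^bsub>S\<^esub> (\<phi> a)) \<otimes>\<^bsub>S\<^esub> \<phi> b = \<phi> (t \<otimes>\<^bsub>T\<^esub> u)"
    using assms unfolding b by (simp add: phi_mult S.m_assoc[symmetric] fraction_mult_denominator)
  have "\<phi> (t \<otimes>\<^bsub>T\<^esub> u) \<otimes>\<^bsub>S\<^esub> inv\<^bsub>S\<^esub> (\<phi> b) =
      ((\<phi> t \<otimes>\<^bsub>S\<^esub> inv\<^bsub>S\<^esub> (\<phi> a)) \<otimes>\<^bsub>S\<^esub> \<phi> b) \<otimes>\<^bsub>S\<^esub> inv\<^bsub>S\<^esub> (\<phi> b)"
    by (simp only: tu)
  also have "\<dots> = (\<phi> t \<otimes>\<^bsub>S\<^esub> inv\<^bsub>S\<^esub> (\<phi> a)) \<otimes>\<^bsub>S\<^esub> (\<phi> b \<otimes>\<^bsub>S\<^esub> inv\<^bsub>S\<^esub> (\<phi> b))"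
    using assms(1-4) by (simp add: S.m_assoc)
  also have "\<dots> = \<phi> t \<otimes>\<^bsub>S\<^esub> inv\<^bsub>S\<^esub> (\<phi> a)"
    using assms(1-4) by (simp add: phi_r_inv)
  finally show ?thesis by simp
qed

lemma fraction_eq_common_denominator:
  assumes t: "t \<in> carrier T" "t' \<in> carrier T" and a: "a \<in> A" "a' \<in> A"
    and eq: "\<phi> t \<otimes>\<^bsub>S\<^esub> inv\<^bsub>S\<^esub> (\<phi> a) = \<phi> t' \<otimes>\<^bsub>S\<^esub> inv\<^bsub>S\<^esub> (\<phi> a')"
  obtains u w b c where "u \<in> carrier T" "w \<in> carrier T" "b \<in> A" "c \<in> A"
    "b = a \<otimes>\<^bsub>T\<^esub> u" "b = a' \<otimes>\<^bsub>T\<^esub> w" "t \<otimes>\<^bsub>T\<^esub> u \<otimes>\<^bsub>T\<^esub> c = t' \<otimes>\<^bsub>T\<^esub> w \<otimes>\<^bsub>T\<^esub> c"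
proof -
  obtain u w b where uw: "u \<in> carrier T" "w \<in> carrier T" "b \<in> A"
    "b = a \<otimes>\<^bsub>T\<^esub> u" "b = a' \<otimes>\<^bsub>T\<^esub> w"
    using ore_common_multiple[OF a] by blast
  have "\<phi> (t \<otimes>\<^bsub>T\<^esub> u) \<otimes>\<^bsub>S\<^esub> inv\<^bsub>S\<^esub> (\<phi> b) = \<phi> (t' \<otimes>\<^bsub>T\<^esub> w) \<otimes>\<^bsub>S\<^esub> inv\<^bsub>S\<^esub> (\<phi> b)"
    using fraction_expand[OF t(1) a(1) uw(1,3,4)] fraction_expand[OF t(2) a(2) uw(2,3,5)] eq by simp
  then have "\<phi> (t \<otimes>\<^bsub>T\<^esub> u) \<otimes>\<^bsub>S\<^esub> inv\<^bsub>S\<^esub> (\<phi> b) \<otimes>\<^bsub>S\<^esub> \<phi> b =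
      \<phi> (t' \<otimes>\<^bsub>T\<^esub> w) \<otimes>\<^bsub>S\<^esub> inv\<^bsub>S\<^esub> (\<phi> b) \<otimes>\<^bsub>S\<^esub> \<phi> b"
    by simp
  then have "\<phi> (t \<otimes>\<^bsub>T\<^esub> u) = \<phi> (t' \<otimes>\<^bsub>T\<^esub> w)"
    using uw(1-3) t by (simp add: fraction_mult_denominator)
  then have "\<phi> (t \<otimes>\<^bsub>T\<^esub> u \<ominus>\<^bsub>T\<^esub> t' \<otimes>\<^bsub>T\<^esub> w) = \<zero>\<^bsub>S\<^esub>"
    using uw t by (simp add: phi_minus) (simp add: a_minus_def S.r_neg)
  moreover have "t \<otimes>\<^bsub>T\<^esub> u \<ominus>\<^bsub>T\<^esub> t' \<otimes>\<^bsub>T\<^esub> w \<in> carrier T" using uw(1,2) t by simp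
  ultimately obtain c where c: "c \<in> A" "(t \<otimes>\<^bsub>T\<^esub> u \<ominus>\<^bsub>T\<^esub> t' \<otimes>\<^bsub>T\<^esub> w) \<otimes>\<^bsub>T\<^esub> c = \<zero>\<^bsub>T\<^esub>"
    using phi_eq_zero_iff by blast
  have "t \<otimes>\<^bsub>T\<^esub> u \<otimes>\<^bsub>T\<^esub> c \<ominus>\<^bsub>T\<^esub> t' \<otimes>\<^bsub>T\<^esub> w \<otimes>\<^bsub>T\<^esub> c = \<zero>\<^bsub>T\<^esub>"
    using c uw(1,2) t by (simp add: a_minus_def T.l_distr T.l_minus)
  then have "t \<otimes>\<^bsub>T\<^esub> u \<otimes>\<^bsub>T\<^esub> c = t' \<otimes>\<^bsub>T\<^esub> w \<otimes>\<^bsub>T\<^esub> c"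
    using uw(1,2) t c(1) T.minus_eq_zero_imp_eq by simp
  then show ?thesis using that uw c(1) by blast
qed

end

definition restrict_scalars ::
  "('s, 'y) ring_scheme \<Rightarrow> ('r \<Rightarrow> 's) \<Rightarrow> ('s, 'e, 'z) module_scheme \<Rightarrow> ('r, 'e) module" where
  "restrict_scalars S \<phi> E = \<lparr>carrier = carrier E, mult = mult E, one = one E, zero = zero E,
     add = add E, smult = (\<lambda>r v. smult E (\<phi> r) v)\<rparr>"

lemma restrict_scalars_simps [simp]:
  "carrier (restrict_scalars S \<phi> E) = carrier E" "zero (restrict_scalars S \<phi> E) = zero E"
  "add (restrict_scalars S \<phi> E) = add E" "ract (restrict_scalars S \<phi> E) v r = ract E v (\<phi> r)"
  by (auto simp: restrict_scalars_def ract_def)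

lemma restrict_scalars_a_inv [simp]: "a_inv (restrict_scalars S \<phi> E) = a_inv E"
  by (rule ext) (simp add: restrict_scalars_def a_inv_def m_inv_def)

lemma restrict_scalars_right_module:
  assumes E: "right_module S E" and T: "ring T" and \<phi>: "\<phi> \<in> ring_hom T S"
  shows "right_module T (restrict_scalars S \<phi> E)"
proof -
  interpret E: right_mod S E by (rule right_mod.intro[OF E])
  have "abelian_group (restrict_scalars S \<phi> E)"
    by (rule abelian_groupI) (auto simp: E.M.a_ac intro: E.M.l_neg)
  then show ?thesis
    using \<phi> unfolding right_module_def
    by (auto simp: T ring_hom_closed[OF \<phi>] ring_hom_add[OF \<phi>] ring_hom_mult[OF \<phi>]
        ring_hom_one[OF \<phi>] E.ract_add_l E.ract_add_r E.ract_mult)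
qed

locale localized_module = ore_frac T A S \<phi> + E: right_mod S E
  for T :: "('r, 'x) ring_scheme" and A and S :: "('s, 'y) ring_scheme" and \<phi>
    and E :: "('s, 'e, 'z) module_scheme"
begin

abbreviation ET :: "('r, 'e) module" where "ET \<equiv> restrict_scalars S \<phi> E"

sublocale ET: right_mod T ET
  by unfold_locales (rule restrict_scalars_right_module[OF E.right_module T.ring_axioms phi_hom])

lemma submod_restrict_scalars: "submod S E K \<Longrightarrow> submod T ET K"
  unfolding submod_def by auto

lemma ract_phi_inv:
  "x \<in> carrier E \<Longrightarrow> a \<in> A \<Longrightarrow> ract E (ract E x (\<phi> a)) (inv\<^bsub>S\<^esub> (\<phi> a)) = x"
  by (simp add: E.ract_mult[symmetric] phi_r_inv)

lemma ract_phi_eq_zero: "x \<in> carrier E \<Longrightarrow> a \<in> A \<Longrightarrow> ract E x (\<phi> a) = \<zero>\<^bsub>E\<^esub> \<Longrightarrow> x = \<zero>\<^bsub>E\<^esub>"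
  using ract_phi_inv by force

definition saturation :: "'e set \<Rightarrow> 'e set" where
  "saturation P = {e \<in> carrier E. \<exists>a\<in>A. ract E e (\<phi> a) \<in> P}"

lemma subset_saturation: "submod T ET P \<Longrightarrow> P \<subseteq> saturation P"
  unfolding saturation_def using one_in_A by (force dest: submodD(1))

lemma saturation_common_denominator:
  assumes P: "submod T ET P" and "v \<in> saturation P" "w \<in> saturation P"
  obtains b where "b \<in> A" "ract E v (\<phi> b) \<in> P" "ract E w (\<phi> b) \<in> P"
proof -
  obtain a a' where h: "v \<in> carrier E" "w \<in> carrier E" "a \<in> A" "a' \<in> A"
    "ract E v (\<phi> a) \<in> P" "ract E w (\<phi> a') \<in> P"
    using assms unfolding saturation_def by auto
  obtain u u' b where b: "u \<in> carrier T" "u' \<in> carrier T" "b \<in> A"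
    "b = a \<otimes>\<^bsub>T\<^esub> u" "b = a' \<otimes>\<^bsub>T\<^esub> u'"
    using ore_common_multiple[OF h(3,4)] by blast
  have "ract E v (\<phi> b) = ract E (ract E v (\<phi> a)) (\<phi> u)"
    using h b(1) unfolding b(4) by (simp add: phi_mult E.ract_mult)
  moreover have "ract E w (\<phi> b) = ract E (ract E w (\<phi> a')) (\<phi> u')"
    using h b(2) unfolding b(5) by (simp add: phi_mult E.ract_mult)
  ultimately show ?thesis using that b(3) submodD(5)[OF P] h(5,6) b(1,2) by simp
qed

text \<open>The right Ore condition moves the denominator of s past the one clearing e.\<close>

lemma saturation_ract:
  assumes P: "submod T ET P" and e: "e \<in> saturation P" and s: "s \<in> carrier S"
  shows "ract E e s \<in> saturation P"
proof -
  obtain a where h: "e \<in> carrier E" "a \<in> A" "ract E e (\<phi> a) \<in> P"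
    using e unfolding saturation_def by auto
  obtain t a' where ta: "t \<in> carrier T" "a' \<in> A" "s = \<phi> t \<otimes>\<^bsub>S\<^esub> inv\<^bsub>S\<^esub> (\<phi> a')"
    using fraction_repr s by blast
  obtain t' a'' where o: "t' \<in> carrier T" "a'' \<in> A" "t \<otimes>\<^bsub>T\<^esub> a'' = a \<otimes>\<^bsub>T\<^esub> t'"
    using ore_condition[OF ta(1) h(2)] by blast
  have c: "a' \<otimes>\<^bsub>T\<^esub> a'' \<in> A" using A_mult_closed ta o by blast
  have "s \<otimes>\<^bsub>S\<^esub> \<phi> (a' \<otimes>\<^bsub>T\<^esub> a'') = (s \<otimes>\<^bsub>S\<^esub> \<phi> a') \<otimes>\<^bsub>S\<^esub> \<phi> a''"
    using ta o s by (simp add: phi_mult S.m_assoc)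
  also have "\<dots> = \<phi> a \<otimes>\<^bsub>S\<^esub> \<phi> t'"
    unfolding ta(3) using ta(1,2) o h by (simp add: fraction_mult_denominator phi_mult[symmetric])
  finally have "ract E (ract E e s) (\<phi> (a' \<otimes>\<^bsub>T\<^esub> a'')) = ract E (ract E e (\<phi> a)) (\<phi> t')"
    using h c o s by (simp add: E.ract_mult[symmetric])
  then show ?thesis
    unfolding saturation_def using c h s submodD(5)[OF P h(3) o(1)]
    by (auto intro!: bexI[of _ "a' \<otimes>\<^bsub>T\<^esub> a''"])
qed

lemma saturation_submod:
  assumes P: "submod T ET P"
  shows "submod S E (saturation P)"
  unfolding submod_def
proof (intro conjI ballI)
  fix v w assume vw: "v \<in> saturation P" "w \<in> saturation P"
  then obtain b where b: "b \<in> A" "ract E v (\<phi> b) \<in> P" "ract E w (\<phi> b) \<in> P"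
    using saturation_common_denominator[OF P] by blast
  then have "ract E (v \<oplus>\<^bsub>E\<^esub> w) (\<phi> b) \<in> P"
    using vw submodD(3)[OF P] by (simp add: saturation_def E.ract_add_l)
  then show "v \<oplus>\<^bsub>E\<^esub> w \<in> saturation P" using vw b unfolding saturation_def by auto
next
  fix v assume "v \<in> saturation P"
  then show "\<ominus>\<^bsub>E\<^esub> v \<in> saturation P"
    unfolding saturation_def using submodD(4)[OF P] by (auto simp: E.ract_neg_l)
qed (use saturation_ract[OF P] submodD(2)[OF P] one_in_A in \<open>auto simp: saturation_def\<close>)

text \<open>An S-submodule inside the saturation of P is controlled by its trace on P.\<close>

lemma artinian_submod_saturation:
  assumes P: "submod T ET P" and art: "artinian_submod T ET P"
    and L: "submod S E L" and LP: "L \<subseteq> saturation P"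
  shows "artinian_submod S E L"
  unfolding artinian_submod_def
proof (intro allI impI)
  fix f :: "nat \<Rightarrow> 'e set"
  assume f: "(\<forall>n. submod S E (f n) \<and> f n \<subseteq> L) \<and> (\<forall>n. f (Suc n) \<subseteq> f n)"
  have "\<forall>n. submod T ET (f n \<inter> P) \<and> f n \<inter> P \<subseteq> P"
    using f P submod_restrict_scalars unfolding submod_def by auto
  moreover have "\<forall>n. f (Suc n) \<inter> P \<subseteq> f n \<inter> P" using f by blast
  ultimately obtain n where n: "\<forall>m\<ge>n. f m \<inter> P = f n \<inter> P"
    using art unfolding artinian_submod_def by presburger
  have "f m = f n" if "m \<ge> n" for m
  proof
    show "f m \<subseteq> f n" using f lift_Suc_antimono_le[of f] that by blast
    show "f n \<subseteq> f m"
    proof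
      fix e assume e: "e \<in> f n"
      then obtain a where a: "e \<in> carrier E" "a \<in> A" "ract E e (\<phi> a) \<in> P"
        using f LP unfolding saturation_def by blast
      then have "ract E e (\<phi> a) \<in> f n \<inter> P" using e f submodD(5)[of S E "f n"] by auto
      then have "ract E e (\<phi> a) \<in> f m" using n that by blast
      then have "ract E (ract E e (\<phi> a)) (inv\<^bsub>S\<^esub> (\<phi> a)) \<in> f m"
        using f submodD(5)[of S E "f m"] a(2) by auto
      then show "e \<in> f m" using ract_phi_inv[OF a(1,2)] by simp
    qed
  qed
  then show "\<exists>n. \<forall>m\<ge>n. f m = f n" by blast
qed

end

locale torsion_free_divisible = ore_frac T A S \<phi> + D: right_mod T D
  for T :: "('r, 'x) ring_scheme" and A and S :: "('s, 'y) ring_scheme" and \<phi>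
    and D :: "('r, 'd, 'z) module_scheme" +
  assumes torsion_free: "\<And>e a. e \<in> carrier D \<Longrightarrow> a \<in> A \<Longrightarrow> ract D e a = \<zero>\<^bsub>D\<^esub> \<Longrightarrow> e = \<zero>\<^bsub>D\<^esub>"
    and divisible: "\<And>e a. e \<in> carrier D \<Longrightarrow> a \<in> A \<Longrightarrow> \<exists>y\<in>carrier D. ract D y a = e"
begin

lemma ract_A_cancel:
  assumes "y \<in> carrier D" "y' \<in> carrier D" "c \<in> A" "ract D y c = ract D y' c"
  shows "y = y'"
proof -
  have "ract D (y \<ominus>\<^bsub>D\<^esub> y') c = \<zero>\<^bsub>D\<^esub>"
    using assms by (simp add: D.ract_minus_l) (simp add: a_minus_def D.M.r_neg)
  then show ?thesis using assms torsion_free D.M.minus_eq_zero_imp_eq by blast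
qed

text \<open>The unique extension of the T-action to S: e (t/a) is the y with y a = e t.\<close>

definition frac_act :: "'d \<Rightarrow> 's \<Rightarrow> 'd" where
  "frac_act e s = (THE y. y \<in> carrier D \<and> (\<exists>t\<in>carrier T. \<exists>a\<in>A.
      s = \<phi> t \<otimes>\<^bsub>S\<^esub> inv\<^bsub>S\<^esub> (\<phi> a) \<and> ract D y a = ract D e t))"

lemma frac_act_unique:
  assumes e: "e \<in> carrier D" and t: "t \<in> carrier T" "t' \<in> carrier T" and a: "a \<in> A" "a' \<in> A"
    and eq: "\<phi> t \<otimes>\<^bsub>S\<^esub> inv\<^bsub>S\<^esub> (\<phi> a) = \<phi> t' \<otimes>\<^bsub>S\<^esub> inv\<^bsub>S\<^esub> (\<phi> a')"
    and y: "y \<in> carrier D" "y' \<in> carrier D" "ract D y a = ract D e t" "ract D y' a' = ract D e t'"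
  shows "y = y'"
proof -
  obtain u w b c where uw: "u \<in> carrier T" "w \<in> carrier T" "b \<in> A" "c \<in> A"
    "b = a \<otimes>\<^bsub>T\<^esub> u" "b = a' \<otimes>\<^bsub>T\<^esub> w" "t \<otimes>\<^bsub>T\<^esub> u \<otimes>\<^bsub>T\<^esub> c = t' \<otimes>\<^bsub>T\<^esub> w \<otimes>\<^bsub>T\<^esub> c"
    using fraction_eq_common_denominator[OF t a eq] by blast
  have "ract D y (b \<otimes>\<^bsub>T\<^esub> c) = ract D e (t \<otimes>\<^bsub>T\<^esub> u \<otimes>\<^bsub>T\<^esub> c)"
    using uw(1,4) y t e a unfolding uw(5) by (simp add: D.ract_mult)
  also have "\<dots> = ract D e (t' \<otimes>\<^bsub>T\<^esub> w \<otimes>\<^bsub>T\<^esub> c)" using uw(7) by simp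
  also have "\<dots> = ract D y' (b \<otimes>\<^bsub>T\<^esub> c)"
    using uw(2,4) y t e a unfolding uw(6) by (simp add: D.ract_mult)
  finally show ?thesis using ract_A_cancel[OF y(1,2) A_mult_closed[OF uw(3,4)]] by simp
qed

lemma frac_act_eq:
  assumes "e \<in> carrier D" "t \<in> carrier T" "a \<in> A" "y \<in> carrier D" "ract D y a = ract D e t"
  shows "frac_act e (\<phi> t \<otimes>\<^bsub>S\<^esub> inv\<^bsub>S\<^esub> (\<phi> a)) = y"
  unfolding frac_act_def
proof (rule the_equality)
  fix y' assume "y' \<in> carrier D \<and> (\<exists>t'\<in>carrier T. \<exists>a'\<in>A.
    \<phi> t \<otimes>\<^bsub>S\<^esub> inv\<^bsub>S\<^esub> (\<phi> a) = \<phi> t' \<otimes>\<^bsub>S\<^esub> inv\<^bsub>S\<^esub> (\<phi> a') \<and> ract D y' a' = ract D e t')"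
  then show "y' = y" using frac_act_unique assms by metis
qed (use assms in blast)

lemma frac_act_fraction:
  assumes e: "e \<in> carrier D" and t: "t \<in> carrier T" and a: "a \<in> A"
  shows "frac_act e (\<phi> t \<otimes>\<^bsub>S\<^esub> inv\<^bsub>S\<^esub> (\<phi> a)) \<in> carrier D"
    and "ract D (frac_act e (\<phi> t \<otimes>\<^bsub>S\<^esub> inv\<^bsub>S\<^esub> (\<phi> a))) a = ract D e t"
proof -
  obtain y where y: "y \<in> carrier D" "ract D y a = ract D e t"
    using divisible[of "ract D e t" a] e t a by auto
  then show "frac_act e (\<phi> t \<otimes>\<^bsub>S\<^esub> inv\<^bsub>S\<^esub> (\<phi> a)) \<in> carrier D"
    and "ract D (frac_act e (\<phi> t \<otimes>\<^bsub>S\<^esub> inv\<^bsub>S\<^esub> (\<phi> a))) a = ract D e t"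
    using frac_act_eq[OF e t a y] by simp_all
qed

lemma frac_act_closed [simp]: "e \<in> carrier D \<Longrightarrow> s \<in> carrier S \<Longrightarrow> frac_act e s \<in> carrier D"
  using fraction_repr frac_act_fraction(1) by metis

lemma frac_act_one [simp]: "e \<in> carrier D \<Longrightarrow> frac_act e \<one>\<^bsub>S\<^esub> = e"
  using frac_act_eq[of e "\<one>\<^bsub>T\<^esub>" "\<one>\<^bsub>T\<^esub>" e] phi_r_inv[OF one_in_A] one_in_A by simp

lemma frac_act_add_l:
  assumes e: "e \<in> carrier D" "e' \<in> carrier D" and s: "s \<in> carrier S"
  shows "frac_act (e \<oplus>\<^bsub>D\<^esub> e') s = frac_act e s \<oplus>\<^bsub>D\<^esub> frac_act e' s"
proof -
  obtain t a where ta: "t \<in> carrier T" "a \<in> A" "s = \<phi> t \<otimes>\<^bsub>S\<^esub> inv\<^bsub>S\<^esub> (\<phi> a)"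
    using fraction_repr s by blast
  show ?thesis unfolding ta(3)
    by (rule frac_act_eq) (use e ta frac_act_fraction in \<open>auto simp: D.ract_add_l\<close>)
qed

lemma frac_act_add_r:
  assumes e: "e \<in> carrier D" and s: "s \<in> carrier S" "s' \<in> carrier S"
  shows "frac_act e (s \<oplus>\<^bsub>S\<^esub> s') = frac_act e s \<oplus>\<^bsub>D\<^esub> frac_act e s'"
proof -
  obtain t a where ta: "t \<in> carrier T" "a \<in> A" "s = \<phi> t \<otimes>\<^bsub>S\<^esub> inv\<^bsub>S\<^esub> (\<phi> a)"
    using fraction_repr s by blast
  obtain t' a' where ta': "t' \<in> carrier T" "a' \<in> A" "s' = \<phi> t' \<otimes>\<^bsub>S\<^esub> inv\<^bsub>S\<^esub> (\<phi> a')"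
    using fraction_repr s by blast
  obtain u w b where uw: "u \<in> carrier T" "w \<in> carrier T" "b \<in> A"
    "b = a \<otimes>\<^bsub>T\<^esub> u" "b = a' \<otimes>\<^bsub>T\<^esub> w"
    using ore_common_multiple[OF ta(2) ta'(2)] by blast
  have s1: "s = \<phi> (t \<otimes>\<^bsub>T\<^esub> u) \<otimes>\<^bsub>S\<^esub> inv\<^bsub>S\<^esub> (\<phi> b)"
    using fraction_expand[OF ta(1,2) uw(1,3,4)] ta by simp
  have s2: "s' = \<phi> (t' \<otimes>\<^bsub>T\<^esub> w) \<otimes>\<^bsub>S\<^esub> inv\<^bsub>S\<^esub> (\<phi> b)"
    using fraction_expand[OF ta'(1,2) uw(2,3,5)] ta' by simp
  have sum: "s \<oplus>\<^bsub>S\<^esub> s' = \<phi> (t \<otimes>\<^bsub>T\<^esub> u \<oplus>\<^bsub>T\<^esub> t' \<otimes>\<^bsub>T\<^esub> w) \<otimes>\<^bsub>S\<^esub> inv\<^bsub>S\<^esub> (\<phi> b)"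
    unfolding s1 s2 using uw ta ta' by (simp add: phi_add S.l_distr)
  show ?thesis unfolding sum unfolding s1 s2
    by (rule frac_act_eq)
      (use e uw(1-3) ta ta' frac_act_fraction[of e _ b] in \<open>auto simp: D.ract_add_l D.ract_add_r\<close>)
qed

lemma frac_act_ract:
  assumes e: "e \<in> carrier D" and r: "r \<in> carrier T" and s: "s \<in> carrier S"
  shows "frac_act (ract D e r) s = frac_act e (\<phi> r \<otimes>\<^bsub>S\<^esub> s)"
proof -
  obtain t a where ta: "t \<in> carrier T" "a \<in> A" "s = \<phi> t \<otimes>\<^bsub>S\<^esub> inv\<^bsub>S\<^esub> (\<phi> a)"
    using fraction_repr s by blast
  have rs: "\<phi> r \<otimes>\<^bsub>S\<^esub> s = \<phi> (r \<otimes>\<^bsub>T\<^esub> t) \<otimes>\<^bsub>S\<^esub> inv\<^bsub>S\<^esub> (\<phi> a)"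
    using ta r by (simp add: phi_mult S.m_assoc)
  show ?thesis unfolding rs unfolding ta(3)
    by (rule frac_act_eq[symmetric])
      (use e r ta(1,2) frac_act_fraction[of "ract D e r" t a] in \<open>auto simp: D.ract_mult\<close>)
qed

end

section \<open>Formal sums and the tensor product\<close>

definition fs_supp :: "('p \<Rightarrow> int) \<Rightarrow> 'p set" where
  "fs_supp c = {p. c p \<noteq> 0}"

lemma formal_sums_iff:
  "c \<in> formal_sums V S \<longleftrightarrow> finite (fs_supp c) \<and> fs_supp c \<subseteq> carrier V \<times> carrier S"
  unfolding formal_sums_def fs_supp_def by auto

lemma fs_supp_add: "fs_supp (fs_add c d) \<subseteq> fs_supp c \<union> fs_supp d"
  unfolding fs_supp_def fs_add_def by auto

lemma fs_supp_sub: "fs_supp (fs_sub c d) \<subseteq> fs_supp c \<union> fs_supp d"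
  unfolding fs_supp_def fs_sub_def by auto

lemma fs_supp_delta: "fs_supp (delta p) = {p}"
  unfolding fs_supp_def delta_def by auto

lemma fs_add_in: "c \<in> formal_sums V S \<Longrightarrow> d \<in> formal_sums V S \<Longrightarrow> fs_add c d \<in> formal_sums V S"
  unfolding formal_sums_iff using fs_supp_add[of c d] by (meson finite_Un finite_subset le_sup_iff order_trans)

lemma fs_sub_in: "c \<in> formal_sums V S \<Longrightarrow> d \<in> formal_sums V S \<Longrightarrow> fs_sub c d \<in> formal_sums V S"
  unfolding formal_sums_iff using fs_supp_sub[of c d] by (meson finite_Un finite_subset le_sup_iff order_trans)

lemma delta_in [simp]: "v \<in> carrier V \<Longrightarrow> s \<in> carrier S \<Longrightarrow> delta (v, s) \<in> formal_sums V S"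
  unfolding formal_sums_iff fs_supp_delta by auto

lemma zero_in_formal_sums: "(\<lambda>_. 0) \<in> formal_sums V S"
  unfolding formal_sums_iff fs_supp_def by auto

lemma fs_add_sub_cancel: "fs_add (fs_sub c d) d = c"
  unfolding fs_add_def fs_sub_def by auto

lemma fs_sub_add_cancel: "fs_sub (fs_add c d) d = c"
  unfolding fs_add_def fs_sub_def by auto

lemma tensor_free_simps [simp]:
  "carrier (tensor_free T S \<phi> V) = formal_sums V S" "zero (tensor_free T S \<phi> V) = (\<lambda>_. 0)"
  "add (tensor_free T S \<phi> V) = fs_add" "ract (tensor_free T S \<phi> V) c s = fs_act S c s"
  by (auto simp: tensor_free_def ract_def)

lemma fs_act_delta: "fs_act S (delta (v, u)) s = delta (v, u \<otimes>\<^bsub>S\<^esub> s)"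
proof (rule ext, clarify)
  fix v' u'
  have "{s'. delta (v, u) (v', s') \<noteq> 0 \<and> s' \<otimes>\<^bsub>S\<^esub> s = u'} =
      (if v' = v \<and> u \<otimes>\<^bsub>S\<^esub> s = u' then {u} else {})"
    by (auto simp: delta_def)
  then show "fs_act S (delta (v, u)) s (v', u') = delta (v, u \<otimes>\<^bsub>S\<^esub> s) (v', u')"
    unfolding fs_act_def by (auto simp: delta_def)
qed

definition fs_mass :: "('p \<Rightarrow> int) \<Rightarrow> nat" where
  "fs_mass c = (\<Sum>q\<in>fs_supp c. nat \<bar>c q\<bar>)"

lemma fs_mass_less:
  assumes fin: "finite (fs_supp c)" and p: "p \<in> fs_supp c"
    and same: "\<And>q. q \<noteq> p \<Longrightarrow> c' q = c q" and lt: "\<bar>c' p\<bar> < \<bar>c p\<bar>"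
  shows "fs_mass c' < fs_mass c"
proof -
  have sub: "fs_supp c' \<subseteq> fs_supp c"
  proof
    fix q assume "q \<in> fs_supp c'"
    then show "q \<in> fs_supp c" using same[of q] p unfolding fs_supp_def by (cases "q = p") auto
  qed
  have "fs_mass c' = (\<Sum>q\<in>fs_supp c. nat \<bar>c' q\<bar>)"
    unfolding fs_mass_def by (rule sum.mono_neutral_left) (use fin sub in \<open>auto simp: fs_supp_def\<close>)
  also have "\<dots> < (\<Sum>q\<in>fs_supp c. nat \<bar>c q\<bar>)"
  proof (rule sum_strict_mono_ex1[OF fin])
    show "\<forall>x\<in>fs_supp c. nat \<bar>c' x\<bar> \<le> nat \<bar>c x\<bar>"
      using same lt by (metis order.strict_implies_order nat_mono order_refl)
    show "\<exists>a\<in>fs_supp c. nat \<bar>c' a\<bar> < nat \<bar>c a\<bar>"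
      using p lt by (intro bexI[OF _ p]) (simp add: fs_supp_def)
  qed
  finally show ?thesis unfolding fs_mass_def .
qed

lemma formal_sums_induct [consumes 1, case_names zero add sub]:
  assumes c: "c \<in> formal_sums V S" and zero: "P (\<lambda>_. 0)"
    and add: "\<And>c p. c \<in> formal_sums V S \<Longrightarrow> p \<in> carrier V \<times> carrier S \<Longrightarrow> P c \<Longrightarrow> P (fs_add c (delta p))"
    and sub: "\<And>c p. c \<in> formal_sums V S \<Longrightarrow> p \<in> carrier V \<times> carrier S \<Longrightarrow> P c \<Longrightarrow> P (fs_sub c (delta p))"
  shows "P c"
  using c
proof (induction "fs_mass c" arbitrary: c rule: less_induct)
  case less
  show ?case
  proof (cases "fs_supp c = {}")
    case True
    then have "c = (\<lambda>_. 0)" unfolding fs_supp_def by auto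
    then show ?thesis using zero by simp
  next
    case False
    then obtain p where p: "p \<in> fs_supp c" by auto
    have fin: "finite (fs_supp c)" and pc: "p \<in> carrier V \<times> carrier S"
      using less.prems p unfolding formal_sums_iff by auto
    have d: "delta p \<in> formal_sums V S" using pc by (cases p) simp
    show ?thesis
    proof (cases "c p > 0")
      case True
      have "fs_mass (fs_sub c (delta p)) < fs_mass c"
        by (rule fs_mass_less[OF fin p]) (use True in \<open>auto simp: fs_sub_def delta_def\<close>)
      then have "P (fs_sub c (delta p))" by (rule less.hyps[OF _ fs_sub_in[OF less.prems d]])
      then show ?thesis using add[OF fs_sub_in[OF less.prems d] pc] by (simp add: fs_add_sub_cancel)
    next
      case False
      then have "c p < 0" using p unfolding fs_supp_def by auto
      then have "fs_mass (fs_add c (delta p)) < fs_mass c"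
        by (intro fs_mass_less[OF fin p]) (auto simp: fs_add_def delta_def)
      then have "P (fs_add c (delta p))" by (rule less.hyps[OF _ fs_add_in[OF less.prems d]])
      then show ?thesis using sub[OF fs_add_in[OF less.prems d] pc] by (simp add: fs_sub_add_cancel)
    qed
  qed
qed

context torsion_free_divisible
begin

definition tensor_eval :: "('v \<Rightarrow> 'd) \<Rightarrow> ('v \<times> 's \<Rightarrow> int) \<Rightarrow> 'd" where
  "tensor_eval g c = finsum D (\<lambda>p. [c p] \<cdot>\<^bsub>D\<^esub> frac_act (g (fst p)) (snd p)) (fs_supp c)"

context
  fixes V :: "('r, 'v, 'w) module_scheme" and g :: "'v \<Rightarrow> 'd"
  assumes V: "right_module T V" and g: "rhom T V D g"
begin

interpretation V: right_mod T V by (rule right_mod.intro[OF V])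

lemma tensor_eval_term_closed:
  "p \<in> carrier V \<times> carrier S \<Longrightarrow> [(k::int)] \<cdot>\<^bsub>D\<^esub> frac_act (g (fst p)) (snd p) \<in> carrier D"
  using rhom_closed[OF g] by (auto intro!: D.M.add.int_pow_closed)

lemma tensor_eval_on:
  assumes c: "c \<in> formal_sums V S" and U: "finite U" "fs_supp c \<subseteq> U" "U \<subseteq> carrier V \<times> carrier S"
  shows "tensor_eval g c = finsum D (\<lambda>p. [c p] \<cdot>\<^bsub>D\<^esub> frac_act (g (fst p)) (snd p)) U"
  unfolding tensor_eval_def
proof (rule D.M.add.finprod_mono_neutral_cong_left)
  show "\<And>i. i \<in> U - fs_supp c \<Longrightarrow> [c i] \<cdot>\<^bsub>D\<^esub> frac_act (g (fst i)) (snd i) = \<zero>\<^bsub>D\<^esub>"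
    using U rhom_closed[OF g] by (auto simp: fs_supp_def add_pow_def)
qed (use U tensor_eval_term_closed in blast)+

lemma tensor_eval_add:
  assumes c: "c \<in> formal_sums V S" and d: "d \<in> formal_sums V S"
  shows "tensor_eval g (fs_add c d) = tensor_eval g c \<oplus>\<^bsub>D\<^esub> tensor_eval g d"
proof -
  define U where "U = fs_supp c \<union> fs_supp d"
  have U: "finite U" "U \<subseteq> carrier V \<times> carrier S" using c d unfolding U_def formal_sums_iff by auto
  have cl: "(\<lambda>p. [e p] \<cdot>\<^bsub>D\<^esub> frac_act (g (fst p)) (snd p)) \<in> U \<rightarrow> carrier D" for e :: "'v \<times> 's \<Rightarrow> int"
    using U tensor_eval_term_closed by auto
  have "tensor_eval g (fs_add c d) = finsum D (\<lambda>p. [fs_add c d p] \<cdot>\<^bsub>D\<^esub> frac_act (g (fst p)) (snd p)) U"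
    by (rule tensor_eval_on) (use U c d fs_supp_add[of c d] in \<open>auto simp: U_def intro: fs_add_in\<close>)
  also have "\<dots> = finsum D (\<lambda>p. [c p] \<cdot>\<^bsub>D\<^esub> frac_act (g (fst p)) (snd p) \<oplus>\<^bsub>D\<^esub>
      [d p] \<cdot>\<^bsub>D\<^esub> frac_act (g (fst p)) (snd p)) U"
    by (rule D.M.add.finprod_cong') (use U rhom_closed[OF g] in \<open>auto simp: fs_add_def D.M.add.int_pow_mult\<close>)
  also have "\<dots> = tensor_eval g c \<oplus>\<^bsub>D\<^esub> tensor_eval g d"
    using D.M.add.finprod_multf[OF cl cl] tensor_eval_on[OF c U(1) _ U(2)] tensor_eval_on[OF d U(1) _ U(2)]
    by (simp add: U_def)
  finally show ?thesis .
qed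

lemma tensor_eval_closed: "c \<in> formal_sums V S \<Longrightarrow> tensor_eval g c \<in> carrier D"
  unfolding tensor_eval_def formal_sums_iff by (rule D.M.add.finprod_closed) (use tensor_eval_term_closed in auto)

lemma tensor_eval_sub:
  assumes c: "c \<in> formal_sums V S" and d: "d \<in> formal_sums V S"
  shows "tensor_eval g (fs_sub c d) = tensor_eval g c \<ominus>\<^bsub>D\<^esub> tensor_eval g d"
proof -
  have "tensor_eval g c = tensor_eval g (fs_sub c d) \<oplus>\<^bsub>D\<^esub> tensor_eval g d"
    using tensor_eval_add[OF fs_sub_in[OF c d] d] by (simp add: fs_add_sub_cancel)
  then show ?thesis using tensor_eval_closed c d fs_sub_in[OF c d]
    by (simp add: a_minus_def D.M.a_assoc D.M.r_neg)
qed

lemma tensor_eval_delta: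
  "v \<in> carrier V \<Longrightarrow> s \<in> carrier S \<Longrightarrow> tensor_eval g (delta (v, s)) = frac_act (g v) s"
  unfolding tensor_eval_def fs_supp_delta using rhom_closed[OF g] by (simp add: delta_def D.M.add.int_pow_1)

lemma tensor_eval_gens:
  assumes "x \<in> tensor_gens T S \<phi> V"
  shows "x \<in> formal_sums V S \<and> tensor_eval g x = \<zero>\<^bsub>D\<^esub>"
proof -
  note g_add = g[unfolded rhom_def, THEN conjunct2, THEN conjunct1, rule_format]
    and g_ract = g[unfolded rhom_def, THEN conjunct2, THEN conjunct2, rule_format]
  from assms consider
      (add_l) v v' s where "x = fs_sub (fs_sub (delta (v \<oplus>\<^bsub>V\<^esub> v', s)) (delta (v, s))) (delta (v', s))"
        "v \<in> carrier V" "v' \<in> carrier V" "s \<in> carrier S"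
    | (add_r) v s s' where "x = fs_sub (fs_sub (delta (v, s \<oplus>\<^bsub>S\<^esub> s')) (delta (v, s))) (delta (v, s'))"
        "v \<in> carrier V" "s \<in> carrier S" "s' \<in> carrier S"
    | (act) v t s where "x = fs_sub (delta (ract V v t, s)) (delta (v, \<phi> t \<otimes>\<^bsub>S\<^esub> s))"
        "v \<in> carrier V" "t \<in> carrier T" "s \<in> carrier S"
    unfolding tensor_gens_def by blast
  then show ?thesis
  proof cases
    case add_l
    then show ?thesis
      using rhom_closed[OF g] by (simp add: fs_sub_in tensor_eval_sub tensor_eval_delta g_add frac_act_add_l
          D.M.minus_minus_eq_zero_iff)
  next
    case add_r
    then show ?thesis
      using rhom_closed[OF g] by (simp add: fs_sub_in tensor_eval_sub tensor_eval_delta frac_act_add_r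
          D.M.minus_minus_eq_zero_iff)
  next
    case act
    then show ?thesis
      using rhom_closed[OF g] by (simp add: fs_sub_in tensor_eval_sub tensor_eval_delta g_ract frac_act_ract
          a_minus_def D.M.r_neg)
  qed
qed

lemma tensor_eval_rel: "x \<in> tensor_rel T S \<phi> V \<Longrightarrow> x \<in> formal_sums V S \<and> tensor_eval g x = \<zero>\<^bsub>D\<^esub>"
proof (induction rule: tensor_rel.induct)
  case zero
  then show ?case by (simp add: zero_in_formal_sums tensor_eval_def fs_supp_def)
next
  case (plus c x)
  then show ?case using tensor_eval_gens[of x] by (simp add: fs_add_in tensor_eval_add)
next
  case (minus c x)
  then show ?case using tensor_eval_gens[of x] by (simp add: fs_sub_in tensor_eval_sub a_minus_def)
qed

text \<open>The S-action on D makes v \<otimes> s \<mapsto> g(v) s well defined on V \<otimes> S.\<close>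

lemma tensor_rel_delta_one:
  "u \<in> carrier V \<Longrightarrow> delta (u, \<one>\<^bsub>S\<^esub>) \<in> tensor_rel T S \<phi> V \<Longrightarrow> g u = \<zero>\<^bsub>D\<^esub>"
  using tensor_eval_rel[of "delta (u, \<one>\<^bsub>S\<^esub>)"] tensor_eval_delta[of u "\<one>\<^bsub>S\<^esub>"] rhom_closed[OF g] by simp

end

end

section \<open>The two injective hulls\<close>

lemma essential_nonzero_meet:
  assumes "essential R M N" "submod R M K" "x \<in> K" "x \<noteq> \<zero>\<^bsub>M\<^esub>"
  obtains y where "y \<in> K" "y \<in> N" "y \<noteq> \<zero>\<^bsub>M\<^esub>"
proof -
  have "K \<inter> N \<noteq> {\<zero>\<^bsub>M\<^esub>}" using assms unfolding essential_def by auto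
  moreover have "\<zero>\<^bsub>M\<^esub> \<in> K \<inter> N" using assms unfolding essential_def submod_def by auto
  ultimately show ?thesis using that by blast
qed

text \<open>A torsion element would have a nonzero multiple in the image of V, and the right Ore
  condition pulls the torsion back to V.\<close>

lemma hull_of_torsion_quotient_torsion_free:
  assumes ore: "right_ore_set R A" and V: "right_module R V"
    and hull: "hull_via R V E g (torsion R A V)"
    and e: "e \<in> carrier E" and a: "a \<in> A" and ea: "ract E e a = \<zero>\<^bsub>E\<^esub>"
  shows "e = \<zero>\<^bsub>E\<^esub>"
proof (rule ccontr)
  assume ne: "e \<noteq> \<zero>\<^bsub>E\<^esub>"
  interpret V: right_mod R V by (rule right_mod.intro[OF V])
  interpret E: right_mod R E
    using hull unfolding hull_via_def injective_mod_def by (simp add: right_mod_def)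
  have A: "A \<subseteq> carrier R" "\<And>a b. a \<in> A \<Longrightarrow> b \<in> A \<Longrightarrow> a \<otimes>\<^bsub>R\<^esub> b \<in> A"
    "\<And>t a. t \<in> carrier R \<Longrightarrow> a \<in> A \<Longrightarrow> \<exists>t'\<in>carrier R. \<exists>a'\<in>A. t \<otimes>\<^bsub>R\<^esub> a' = a \<otimes>\<^bsub>R\<^esub> t'"
    using ore unfolding right_ore_set_def by auto
  have g: "rhom R V E g" "\<And>v. v \<in> carrier V \<Longrightarrow> g v = \<zero>\<^bsub>E\<^esub> \<longleftrightarrow> v \<in> torsion R A V"
    and ess: "essential R E (g ` carrier V)"
    using hull unfolding hull_via_def by auto
  have "e \<in> {ract E e r | r. r \<in> carrier R}" using e by (intro CollectI exI[of _ "\<one>\<^bsub>R\<^esub>"]) auto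
  then obtain y where "y \<in> {ract E e r | r. r \<in> carrier R}" "y \<in> g ` carrier V" "y \<noteq> \<zero>\<^bsub>E\<^esub>"
    using essential_nonzero_meet[OF ess E.cyclic_submod[OF e] _ ne] by blast
  then obtain r v where r: "r \<in> carrier R" and v: "v \<in> carrier V" and y: "g v = ract E e r" "g v \<noteq> \<zero>\<^bsub>E\<^esub>"
    by auto
  obtain t' a' where t': "t' \<in> carrier R" and a': "a' \<in> A" and ore': "r \<otimes>\<^bsub>R\<^esub> a' = a \<otimes>\<^bsub>R\<^esub> t'"
    using A(3)[OF r a] by auto
  have "g (ract V v a') = ract E e (r \<otimes>\<^bsub>R\<^esub> a')"
    using g(1) v a' r e A(1) y(1) by (auto simp: rhom_def E.ract_mult)
  also have "\<dots> = \<zero>\<^bsub>E\<^esub>" using e a t' ea A(1) by (simp add: ore' E.ract_mult subsetD)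
  finally have "ract V v a' \<in> torsion R A V" using g(2) v a' A(1) by (simp add: subsetD)
  then obtain b where b: "b \<in> A" "ract V (ract V v a') b = \<zero>\<^bsub>V\<^esub>"
    unfolding torsion_def by blast
  then have "ract V v (a' \<otimes>\<^bsub>R\<^esub> b) = \<zero>\<^bsub>V\<^esub>" using v a' A(1) by (simp add: V.ract_mult subsetD)
  then have "v \<in> torsion R A V" using v A(2)[OF a' b(1)] unfolding torsion_def by blast
  then show False using g(2) v y(2) by simp
qed

locale localization_hulls = ore_frac T A S \<phi> + V: right_mod T V
  for T :: "('r, 'x) ring_scheme" and A and S :: "('s, 'y) ring_scheme" and \<phi>
    and V :: "('r, 'v, 'w) module_scheme" +
  fixes E :: "('s, 'e, 'z) module_scheme" and \<beta> :: "('v \<times> 's \<Rightarrow> int) \<Rightarrow> 'e"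
    and E' :: "('r, 'f, 'u) module_scheme" and g :: "'v \<Rightarrow> 'f"
  assumes hull_E: "hull_via S (tensor_free T S \<phi> V) E \<beta> (tensor_rel T S \<phi> V)"
    and hull_E': "hull_via T V E' g (torsion T A V)"
begin

lemma injective_E': "injective_mod T E'"
  using hull_E' unfolding hull_via_def by blast

sublocale localized_module T A S \<phi> E
  using hull_E unfolding hull_via_def injective_mod_def
  by unfold_locales (simp add: right_mod_def)

sublocale torsion_free_divisible T A S \<phi> E'
proof -
  interpret E': right_mod T E'
    using injective_E' unfolding injective_mod_def by (simp add: right_mod_def)
  show "torsion_free_divisible T A S \<phi> E'"
  proof
    show "\<And>e a. e \<in> carrier E' \<Longrightarrow> a \<in> A \<Longrightarrow> ract E' e a = \<zero>\<^bsub>E'\<^esub> \<Longrightarrow> e = \<zero>\<^bsub>E'\<^esub>"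
      using hull_of_torsion_quotient_torsion_free[OF ore V.right_module hull_E'] by blast
    show "\<And>e a. e \<in> carrier E' \<Longrightarrow> a \<in> A \<Longrightarrow> \<exists>y\<in>carrier E'. ract E' y a = e"
      using E'.injective_divisible[OF injective_E'] A_regular unfolding regular_elem_def by blast
  qed
qed

sublocale TE': right_mod_pair T ET E' by unfold_locales

lemma g_rhom: "rhom T V E' g"
  using hull_E' unfolding hull_via_def by blast

lemma g_kernel: "v \<in> carrier V \<Longrightarrow> g v = \<zero>\<^bsub>E'\<^esub> \<longleftrightarrow> v \<in> torsion T A V"
  using hull_E' unfolding hull_via_def by auto

lemma beta_rhom: "rhom S (tensor_free T S \<phi> V) E \<beta>"
  using hull_E unfolding hull_via_def by blast

lemma beta_closed [simp]: "c \<in> formal_sums V S \<Longrightarrow> \<beta> c \<in> carrier E"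
  using beta_rhom unfolding rhom_def by auto

lemma beta_add: "c \<in> formal_sums V S \<Longrightarrow> d \<in> formal_sums V S \<Longrightarrow> \<beta> (fs_add c d) = \<beta> c \<oplus>\<^bsub>E\<^esub> \<beta> d"
  using beta_rhom unfolding rhom_def by simp

lemma beta_sub:
  assumes c: "c \<in> formal_sums V S" and d: "d \<in> formal_sums V S"
  shows "\<beta> (fs_sub c d) = \<beta> c \<ominus>\<^bsub>E\<^esub> \<beta> d"
proof -
  have "\<beta> c = \<beta> (fs_sub c d) \<oplus>\<^bsub>E\<^esub> \<beta> d"
    using beta_add[OF fs_sub_in[OF c d] d] by (simp add: fs_add_sub_cancel)
  then show ?thesis using c d fs_sub_in[OF c d] by (simp add: a_minus_def E.M.a_assoc E.M.r_neg)
qed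

lemma beta_kernel: "c \<in> formal_sums V S \<Longrightarrow> \<beta> c = \<zero>\<^bsub>E\<^esub> \<longleftrightarrow> c \<in> tensor_rel T S \<phi> V"
  using hull_E unfolding hull_via_def by auto

lemma beta_delta_ract:
  "v \<in> carrier V \<Longrightarrow> u \<in> carrier S \<Longrightarrow> s \<in> carrier S \<Longrightarrow>
   ract E (\<beta> (delta (v, u))) s = \<beta> (delta (v, u \<otimes>\<^bsub>S\<^esub> s))"
  using beta_rhom fs_act_delta[of S v u s] unfolding rhom_def by (metis delta_in tensor_free_simps(1,4))

lemma beta_tensor_gens: "x \<in> tensor_gens T S \<phi> V \<Longrightarrow> \<beta> x = \<zero>\<^bsub>E\<^esub>"
  using tensor_rel.plus[OF tensor_rel.zero, of x] tensor_eval_gens[OF V.right_module g_rhom]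
    beta_kernel
  by (simp add: fs_add_def)

lemma beta_delta_add:
  assumes "v \<in> carrier V" "v' \<in> carrier V" "s \<in> carrier S"
  shows "\<beta> (delta (v \<oplus>\<^bsub>V\<^esub> v', s)) = \<beta> (delta (v, s)) \<oplus>\<^bsub>E\<^esub> \<beta> (delta (v', s))"
proof -
  let ?x = "fs_sub (fs_sub (delta (v \<oplus>\<^bsub>V\<^esub> v', s)) (delta (v, s))) (delta (v', s))"
  have "\<beta> ?x = \<zero>\<^bsub>E\<^esub>" by (rule beta_tensor_gens) (use assms in \<open>unfold tensor_gens_def, blast\<close>)
  moreover have "\<beta> ?x = \<beta> (delta (v \<oplus>\<^bsub>V\<^esub> v', s)) \<ominus>\<^bsub>E\<^esub> \<beta> (delta (v, s)) \<ominus>\<^bsub>E\<^esub> \<beta> (delta (v', s))"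
    using assms by (simp add: beta_sub fs_sub_in)
  ultimately show ?thesis using assms by (simp add: E.M.minus_minus_eq_zero_iff)
qed

lemma beta_delta_phi:
  assumes "v \<in> carrier V" "t \<in> carrier T" "s \<in> carrier S"
  shows "\<beta> (delta (ract V v t, s)) = \<beta> (delta (v, \<phi> t \<otimes>\<^bsub>S\<^esub> s))"
proof -
  let ?x = "fs_sub (delta (ract V v t, s)) (delta (v, \<phi> t \<otimes>\<^bsub>S\<^esub> s))"
  have "\<beta> ?x = \<zero>\<^bsub>E\<^esub>" by (rule beta_tensor_gens) (use assms in \<open>unfold tensor_gens_def, blast\<close>)
  moreover have "\<beta> ?x = \<beta> (delta (ract V v t, s)) \<ominus>\<^bsub>E\<^esub> \<beta> (delta (v, \<phi> t \<otimes>\<^bsub>S\<^esub> s))"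
    using assms by (simp add: beta_sub)
  ultimately show ?thesis using assms E.M.minus_eq_zero_imp_eq[OF beta_closed beta_closed] by simp
qed

text \<open>The map V \<rightarrow> E, v \<mapsto> v \<otimes> 1.\<close>

definition iota :: "'v \<Rightarrow> 'e" where
  "iota v = \<beta> (delta (v, \<one>\<^bsub>S\<^esub>))"

lemma iota_closed [simp]: "v \<in> carrier V \<Longrightarrow> iota v \<in> carrier E"
  unfolding iota_def by simp

lemma iota_add: "v \<in> carrier V \<Longrightarrow> v' \<in> carrier V \<Longrightarrow> iota (v \<oplus>\<^bsub>V\<^esub> v') = iota v \<oplus>\<^bsub>E\<^esub> iota v'"
  unfolding iota_def by (rule beta_delta_add) auto

lemma iota_ract: "v \<in> carrier V \<Longrightarrow> t \<in> carrier T \<Longrightarrow> iota (ract V v t) = ract E (iota v) (\<phi> t)"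
  unfolding iota_def by (simp add: beta_delta_ract beta_delta_phi)

lemma iota_eq_zero_iff: "v \<in> carrier V \<Longrightarrow> iota v = \<zero>\<^bsub>E\<^esub> \<longleftrightarrow> g v = \<zero>\<^bsub>E'\<^esub>"
proof
  assume v: "v \<in> carrier V" and "iota v = \<zero>\<^bsub>E\<^esub>"
  then have "delta (v, \<one>\<^bsub>S\<^esub>) \<in> tensor_rel T S \<phi> V" unfolding iota_def using beta_kernel by simp
  then show "g v = \<zero>\<^bsub>E'\<^esub>" using tensor_rel_delta_one[OF V.right_module g_rhom v] by blast
next
  assume v: "v \<in> carrier V" and "g v = \<zero>\<^bsub>E'\<^esub>"
  then obtain a where a: "a \<in> A" "ract V v a = \<zero>\<^bsub>V\<^esub>" using g_kernel unfolding torsion_def by auto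
  then have "ract E (iota v) (\<phi> a) = \<zero>\<^bsub>E\<^esub>"
    using v iota_ract[of v a] iota_ract[of "\<zero>\<^bsub>V\<^esub>" "\<zero>\<^bsub>T\<^esub>"] by simp
  then show "iota v = \<zero>\<^bsub>E\<^esub>" using ract_phi_eq_zero v a by simp
qed

sublocale VE: right_mod_pair T V ET by unfold_locales
sublocale VE': right_mod_pair T V E' by unfold_locales

lemma linear_on_iota: "linear_on T V ET (carrier V) iota"
  unfolding linear_on_def by (simp add: iota_add iota_ract)

lemma linear_on_g: "linear_on T V E' (carrier V) g"
  using g_rhom unfolding linear_on_def rhom_def by blast

text \<open>The map \<iota>(v) \<mapsto> g(v); it is well defined and injective because \<iota> and g have the same kernel.\<close>

definition g_along_iota :: "'e \<Rightarrow> 'f" where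
  "g_along_iota x = g (inv_into (carrier V) iota x)"

lemma iota_eq_imp_g_eq:
  assumes v: "v \<in> carrier V" "v' \<in> carrier V" and eq: "iota v = iota v'"
  shows "g v = g v'"
proof -
  have "iota (v \<ominus>\<^bsub>V\<^esub> v') = \<zero>\<^bsub>E\<^esub>"
    using VE.linear_on_minus[OF linear_on_iota V.carrier_submod v] eq v by (simp add: a_minus_def E.M.r_neg)
  then have "g v \<ominus>\<^bsub>E'\<^esub> g v' = \<zero>\<^bsub>E'\<^esub>"
    using iota_eq_zero_iff VE'.linear_on_minus[OF linear_on_g V.carrier_submod v] v by simp
  then show ?thesis using v linear_onD(1)[OF linear_on_g] D.M.minus_eq_zero_imp_eq by blast
qed

lemma g_along_iota_iota [simp]: "v \<in> carrier V \<Longrightarrow> g_along_iota (iota v) = g v"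
  unfolding g_along_iota_def
  by (rule iota_eq_imp_g_eq) (auto intro: inv_into_into f_inv_into_f)

lemma iota_image_submod: "submod T ET (iota ` carrier V)"
  using VE.linear_on_image_submod[OF linear_on_iota V.carrier_submod] by simp

lemma linear_on_g_along_iota: "linear_on T ET E' (iota ` carrier V) g_along_iota"
  unfolding linear_on_def using linear_onD[OF linear_on_g]
  by (auto simp: iota_add[symmetric] iota_ract[symmetric])

lemma g_along_iota_eq_zero: "x \<in> iota ` carrier V \<Longrightarrow> g_along_iota x = \<zero>\<^bsub>E'\<^esub> \<Longrightarrow> x = \<zero>\<^bsub>E\<^esub>"
  using iota_eq_zero_iff by auto

lemma beta_delta_in_saturation:
  assumes v: "v \<in> carrier V" and s: "s \<in> carrier S"
  shows "\<beta> (delta (v, s)) \<in> saturation (iota ` carrier V)"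
proof -
  obtain t a where ta: "t \<in> carrier T" "a \<in> A" "s = \<phi> t \<otimes>\<^bsub>S\<^esub> inv\<^bsub>S\<^esub> (\<phi> a)"
    using fraction_repr s by blast
  have "ract E (\<beta> (delta (v, s))) (\<phi> a) = \<beta> (delta (v, \<phi> t))"
    using v s ta by (simp add: beta_delta_ract fraction_mult_denominator)
  also have "\<dots> = iota (ract V v t)" unfolding iota_def using v ta by (simp add: beta_delta_phi)
  finally show ?thesis unfolding saturation_def using ta v s by auto
qed

lemma beta_in_saturation: "c \<in> formal_sums V S \<Longrightarrow> \<beta> c \<in> saturation (iota ` carrier V)"
proof (induction c rule: formal_sums_induct)
  case zero
  then show ?case
    using beta_kernel[OF zero_in_formal_sums] tensor_rel.zero subset_saturation[OF iota_image_submod]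
      submodD(2)[OF iota_image_submod] by auto
next
  case (add c p)
  then show ?case
    using beta_add beta_delta_in_saturation submodD(3)[OF saturation_submod[OF iota_image_submod]]
    by (cases p) auto
next
  case (sub c p)
  then show ?case
    using beta_sub beta_delta_in_saturation submod_minus[OF saturation_submod[OF iota_image_submod]]
    by (cases p) auto
qed

text \<open>A nonzero kernel element x generates an S-submodule meeting the essential image of \<beta>,
  and clearing denominators moves that intersection into \<iota>(V), where the map is injective.\<close>

lemma extension_of_g_along_iota_inj:
  assumes M: "submod T ET M" and NM: "iota ` carrier V \<subseteq> M" and \<psi>: "linear_on T ET E' M \<psi>"
    and ext: "\<And>x. x \<in> iota ` carrier V \<Longrightarrow> \<psi> x = g_along_iota x"
    and x: "x \<in> M" "\<psi> x = \<zero>\<^bsub>E'\<^esub>"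
  shows "x = \<zero>\<^bsub>E\<^esub>"
proof (rule ccontr)
  assume ne: "x \<noteq> \<zero>\<^bsub>E\<^esub>"
  have xE: "x \<in> carrier E" using submodD(1)[OF M] x(1) by force
  have "x \<in> {ract E x s | s. s \<in> carrier S}" using xE by (intro CollectI exI[of _ "\<one>\<^bsub>S\<^esub>"]) auto
  moreover have ess: "essential S E (\<beta> ` formal_sums V S)"
    using hull_E unfolding hull_via_def by auto
  ultimately obtain y where "y \<in> {ract E x s | s. s \<in> carrier S}" "y \<in> \<beta> ` formal_sums V S" "y \<noteq> \<zero>\<^bsub>E\<^esub>"
    using essential_nonzero_meet[OF ess E.cyclic_submod[OF xE] _ ne] by blast
  then obtain s c where s: "s \<in> carrier S" "y = ract E x s" and c: "c \<in> formal_sums V S" "y = \<beta> c"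
    and y0: "y \<noteq> \<zero>\<^bsub>E\<^esub>" by auto
  obtain t a where ta: "t \<in> carrier T" "a \<in> A" "s = \<phi> t \<otimes>\<^bsub>S\<^esub> inv\<^bsub>S\<^esub> (\<phi> a)"
    using fraction_repr s(1) by blast
  obtain b where b: "b \<in> A" "ract E y (\<phi> b) \<in> iota ` carrier V"
    using beta_in_saturation[OF c(1)] unfolding c(2)[symmetric] saturation_def by blast
  obtain u u' d where d: "u \<in> carrier T" "u' \<in> carrier T" "d \<in> A"
    "d = a \<otimes>\<^bsub>T\<^esub> u" "d = b \<otimes>\<^bsub>T\<^esub> u'"
    using ore_common_multiple[OF ta(2) b(1)] by blast
  have yE: "y \<in> carrier E" using c by simp
  have "ract E y (\<phi> d) = ract E x (\<phi> (t \<otimes>\<^bsub>T\<^esub> u))"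
    using xE ta d(1) unfolding s(2) d(4) ta(3)
    by (simp add: phi_mult E.ract_mult[symmetric] S.m_assoc[symmetric] fraction_mult_denominator)
  then have "\<psi> (ract E y (\<phi> d)) = \<zero>\<^bsub>E'\<^esub>"
    using linear_onD(3)[OF \<psi> x(1), of "t \<otimes>\<^bsub>T\<^esub> u"] x(2) ta(1) d(1) by simp
  moreover have yd: "ract E y (\<phi> d) \<in> iota ` carrier V"
    using submodD(5)[OF iota_image_submod b(2) d(2)] yE b(1) d(2)
    unfolding d(5) by (simp add: phi_mult E.ract_mult)
  ultimately have "ract E y (\<phi> d) = \<zero>\<^bsub>E\<^esub>" using ext g_along_iota_eq_zero by simp
  then show False using ract_phi_eq_zero yE d(3) y0 by blast
qed

lemma locally_artinian_transfer:
  assumes LA: "locally_artinian T E'"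
  shows "locally_artinian S E"
  unfolding locally_artinian_def
proof (intro allI impI)
  fix X assume X: "finite X \<and> X \<subseteq> carrier E"
  have "\<exists>M \<psi>. submod T ET M \<and> iota ` carrier V \<subseteq> M \<and> X \<subseteq> M \<and> linear_on T ET E' M \<psi> \<and>
      (\<forall>x\<in>iota ` carrier V. \<psi> x = g_along_iota x)"
    using TE'.injective_linear_extension[OF injective_E' iota_image_submod linear_on_g_along_iota, of X] X
    by simp
  then obtain M \<psi> where M: "submod T ET M" "iota ` carrier V \<subseteq> M" "X \<subseteq> M" "linear_on T ET E' M \<psi>"
    and ext: "\<And>x. x \<in> iota ` carrier V \<Longrightarrow> \<psi> x = g_along_iota x"
    by blast
  define G where "G = gen_submod T E' (\<psi> ` X)"
  define P where "P = {x \<in> M. \<psi> x \<in> G}"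
  have \<psi>X: "\<psi> ` X \<subseteq> carrier E'" using M(3) linear_onD(1)[OF M(4)] by blast
  have G: "submod T E' G" "artinian_submod T E' G"
    using D.gen_submod_submod[OF \<psi>X] LA X \<psi>X unfolding G_def locally_artinian_def by auto
  have P: "submod T ET P" "P \<subseteq> M" "X \<subseteq> P"
    using TE'.linear_on_preimage_submod[OF M(4,1) G(1)] M(3) D.gen_submod_incl[OF \<psi>X]
    unfolding P_def G_def by auto
  have ker: "x = \<zero>\<^bsub>E\<^esub>" if "x \<in> M" "\<psi> x = \<zero>\<^bsub>E'\<^esub>" for x
    by (rule extension_of_g_along_iota_inj[OF M(1,2,4)]) (use ext that in auto)
  have "inj_on \<psi> M" by (rule TE'.linear_on_inj_on[OF M(4,1)]) (simp add: ker)
  then have "artinian_submod T ET P"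
    using TE'.artinian_submod_inj_on[OF linear_on_subset[OF M(4) P(2)] inj_on_subset[OF _ P(2)] G(2)]
    unfolding P_def by blast
  moreover have "gen_submod S E X \<subseteq> saturation P"
    using E.gen_submod_least[OF saturation_submod[OF P(1)]] P(3) subset_saturation[OF P(1)] by blast
  ultimately show "artinian_submod S E (gen_submod S E X)"
    using artinian_submod_saturation[OF P(1) _ E.gen_submod_submod] X by blast
qed

end

theorem lemma5p1:
  fixes T :: "'r ring" and A :: "'r set"
    and S :: "'s ring" and \<phi> :: "'r \<Rightarrow> 's"
    and V :: "('r, 'v) module"
    and E :: "('s, 'e) module" and \<beta> :: "('v \<times> 's \<Rightarrow> int) \<Rightarrow> 'e"
    and E' :: "('r, 'f) module" and g :: "'v \<Rightarrow> 'f"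
  assumes "ring T"
    and "right_ore_set T A"
    and "right_ring_of_fractions T A S \<phi>"
    and "right_module T V"
    and "hull_via S (tensor_free T S \<phi> V) E \<beta> (tensor_rel T S \<phi> V)"
    and "\<not> locally_artinian S E"
    and "hull_via T V E' g (torsion T A V)"
  shows "\<not> locally_artinian T E'"
proof -
  interpret localization_hulls T A S \<phi> V E \<beta> E' g
    using assms by (simp add: localization_hulls_def localization_hulls_axioms_def ore_frac_def right_mod_def)
  show ?thesis using locally_artinian_transfer assms(6) by blast
qed

end
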